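(* Let $\mathbb F$ be a totally real algebraic number field with ring of integers $\mathcal O_{\mathbb F}$, and for each field embedding $\sigma:\mathbb F\to\mathbb R$ let an interval $[a_\sigma,b_\sigma]\subset\mathbb R$ be given. Let $m\ge 1$ and intervals $[s_1,t_1],\dots,[s_m,t_m]\subset\mathbb R$ be fixed. Let $P(x)\in\mathcal O_{\mathbb F}[x]$ be a nonzero polynomial and put $$\delta(\sigma)=\max_{x\in[a_\sigma,b_\sigma]}|P^\sigma(x)|\quad(\sigma:\mathbb F\to\mathbb R),$$ and suppose $\prod_\sigma\delta(\sigma)<1$. Let $\alpha$ be a totally real algebraic integer and let $\tau_1,\dots,\tau_m$ be distinct embeddings $\mathbb F(\alpha)\to\mathbb R$ such that $$s_i\le\tau_i(\alpha)\le t_i\ (i=1,\dots,m),\qquad a_{\tau|\mathbb F}\le\tau(\alpha)\le b_{\tau|\mathbb F}\ \text{ for every embedding }\tau:\mathbb F(\alpha)\to\mathbb R,\ \tau\ne\tau_1,\dots,\tau_m.$$ Put $\sigma_i=\tau_i|_{\mathbb F}$ and $a_i=\max_{x\in[s_i,t_i]}|P^{\sigma_i}(x)|$. If $P(\alpha)\neq 0$, then $$1\le[\mathbb F(\alpha):\mathbb F]\le\frac{\ln\prod_{i=1}^m a_i-\ln\prod_{i=1}^m\delta(\sigma_i)}{-\ln\prod_\sigma\delta(\sigma)}.$$ In particular no such $\alpha$ with $P(\alpha)\ne0$ exists if the right-hand side is $<1$.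
   Context: For a polynomial $P$ with coefficients in $\mathbb F$ and an embedding $\sigma:\mathbb F\to\mathbb R$, $P^\sigma$ denotes the real polynomial obtained by applying $\sigma$ to the coefficients of $P$. Products $\prod_\sigma$ run over all embeddings $\mathbb F\to\mathbb R$. *)

theory Defs
  imports "HOL-Analysis.Analysis" "HOL-Computational_Algebra.Polynomial"
begin

text \<open>All number fields are modelled as subfields of the complex numbers.\<close>

definition subfield_C :: "complex set \<Rightarrow> bool" where
  "subfield_C K \<longleftrightarrow> 0 \<in> K \<and> 1 \<in> K \<and>
     (\<forall>x\<in>K. \<forall>y\<in>K. x + y \<in> K \<and> x * y \<in> K) \<and>
     (\<forall>x\<in>K. - x \<in> K \<and> inverse x \<in> K)"

definition number_field :: "complex set \<Rightarrow> bool" where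
  "number_field K \<longleftrightarrow> subfield_C K \<and>
     (\<exists>B. finite B \<and> B \<subseteq> K \<and> K \<subseteq> {\<Sum>b\<in>B. of_rat (c b) * b | c. True})"

definition adjoin :: "complex set \<Rightarrow> complex \<Rightarrow> complex set" where
  "adjoin K \<alpha> = \<Inter> {L. subfield_C L \<and> K \<subseteq> L \<and> \<alpha> \<in> L}"

definition ext_degree :: "complex set \<Rightarrow> complex set \<Rightarrow> nat" where
  "ext_degree L K = (LEAST n. \<exists>b. (\<forall>i<n. b i \<in> L) \<and>
      L \<subseteq> {\<Sum>i<n. c i * b i | c. \<forall>i<n. c i \<in> K})"

text \<open>Field embeddings K -> C (extended by 0 outside K so that they form a finite set).\<close>
definition complex_embeddings :: "complex set \<Rightarrow> (complex \<Rightarrow> complex) set" where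
  "complex_embeddings K = {\<sigma>. (\<forall>x\<in>K. \<forall>y\<in>K. \<sigma> (x + y) = \<sigma> x + \<sigma> y \<and> \<sigma> (x * y) = \<sigma> x * \<sigma> y)
       \<and> \<sigma> 1 = 1 \<and> (\<forall>x. x \<notin> K \<longrightarrow> \<sigma> x = 0)}"

definition real_embeddings :: "complex set \<Rightarrow> (complex \<Rightarrow> real) set" where
  "real_embeddings K = {\<sigma>. (\<forall>x\<in>K. \<forall>y\<in>K. \<sigma> (x + y) = \<sigma> x + \<sigma> y \<and> \<sigma> (x * y) = \<sigma> x * \<sigma> y)
       \<and> \<sigma> 1 = 1 \<and> (\<forall>x. x \<notin> K \<longrightarrow> \<sigma> x = 0)}"

definition totally_real :: "complex set \<Rightarrow> bool" where
  "totally_real K \<longleftrightarrow> (\<forall>\<sigma>\<in>complex_embeddings K. \<forall>x\<in>K. \<sigma> x \<in> \<real>)"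

definition ring_of_integers :: "complex set \<Rightarrow> complex set" where
  "ring_of_integers K = {x\<in>K. algebraic_int x}"

definition totally_real_alg_int :: "complex \<Rightarrow> bool" where
  "totally_real_alg_int \<alpha> \<longleftrightarrow> algebraic_int \<alpha> \<and> totally_real (adjoin \<rat> \<alpha>)"

definition restrict_emb :: "(complex \<Rightarrow> real) \<Rightarrow> complex set \<Rightarrow> complex \<Rightarrow> real" where
  "restrict_emb \<tau> K = (\<lambda>x. if x \<in> K then \<tau> x else 0)"

definition max_abs_on :: "(complex \<Rightarrow> real) \<Rightarrow> complex poly \<Rightarrow> real \<Rightarrow> real \<Rightarrow> real" where
  "max_abs_on \<sigma> P u v = (SUP x\<in>{u..v}. \<bar>poly (map_poly \<sigma> P) x\<bar>)"

end

theory Submission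
  imports Defs Jordan_Normal_Form.Char_Poly "HOL-Computational_Algebra.Fundamental_Theorem_Algebra"
begin

(* Let K = F(alpha), e = [K:F] and gamma = P(alpha), a nonzero algebraic integer of K.
   Its norm, the product of rho(gamma) over the real embeddings rho of K, is a nonzero rational
   integer, hence has absolute value at least 1.  Each factor equals P^(rho|F)(rho(alpha)); it is
   bounded by a_i for rho = tau_i and by delta(rho|F) for every other rho.  Every embedding of F
   has exactly e extensions to K, so the product of delta(rho|F) over all rho is
   (prod_sigma delta(sigma))^e.  Dividing out the factors belonging to tau_1, ..., tau_m and taking
   logarithms gives the bound on e.

   Induction along a
   tower of simple extensions gives finiteness of the embeddings and rationality of norms. *)

section \<open>Algebraic integers form a ring\<close>

text \<open>An eigenvalue of an integer matrix is a root of its monic integer characteristic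
  polynomial, hence an algebraic integer.\<close>

lemma algebraic_int_eigenvalue:
  fixes A :: "complex mat" and x :: complex
  assumes A: "A \<in> carrier_mat n n" and Z: "\<And>i j. i < n \<Longrightarrow> j < n \<Longrightarrow> A $$ (i,j) \<in> \<int>"
    and v: "v \<in> carrier_vec n" "v \<noteq> 0\<^sub>v n" and ev: "A *\<^sub>v v = x \<cdot>\<^sub>v v"
  shows "algebraic_int x"
proof -
  define B :: "int mat" where "B = mat n n (\<lambda>ij. SOME k. A $$ ij = of_int k)"
  have AB: "A = map_mat of_int B"
  proof (rule eq_matI)
    fix i j assume ij: "i < dim_row (map_mat of_int B)" "j < dim_col (map_mat of_int B)"
    hence "i < n" "j < n" by (auto simp: B_def)
    then obtain k where "A $$ (i,j) = of_int k" using Z by (meson Ints_cases)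
    hence "A $$ (i,j) = of_int (SOME k. A $$ (i,j) = of_int k)" by (rule someI)
    thus "A $$ (i, j) = map_mat of_int B $$ (i, j)" using \<open>i<n\<close> \<open>j<n\<close> by (simp add: B_def)
  qed (use A in \<open>auto simp: B_def\<close>)
  have Bc: "B \<in> carrier_mat n n" by (simp add: B_def)
  have cp: "char_poly A = map_poly of_int (char_poly B)"
    unfolding AB by (rule of_int_hom.char_poly_hom[OF Bc])
  have "eigenvalue A x" unfolding eigenvalue_def eigenvector_def using A v ev by auto
  hence root: "poly (char_poly A) x = 0" using eigenvalue_root_char_poly[OF A] by simp
  from degree_monic_char_poly[OF A] have "lead_coeff (char_poly A) = 1" by simp
  moreover have "\<forall>i. coeff (char_poly A) i \<in> \<int>" unfolding cp by (simp add: coeff_map_poly)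
  ultimately show ?thesis using root by (intro algebraic_int.intros) auto
qed

definition companion_mat :: "complex poly \<Rightarrow> complex mat" where
  "companion_mat p = mat (degree p) (degree p)
     (\<lambda>(i,j). if i + 1 < degree p then (if j = i + 1 then 1 else 0) else - coeff p j)"

lemma companion_mat_eigen:
  assumes p: "lead_coeff p = 1" "poly p x = 0"
  shows "companion_mat p *\<^sub>v vec (degree p) (\<lambda>i. x ^ i) = x \<cdot>\<^sub>v vec (degree p) (\<lambda>i. x ^ i)"
    (is "?A *\<^sub>v ?v = x \<cdot>\<^sub>v ?v")
proof (rule eq_vecI)
  fix i assume "i < dim_vec (x \<cdot>\<^sub>v ?v)"
  hence i: "i < degree p" by simp
  have "(?A *\<^sub>v ?v) $ i = (\<Sum>j<degree p. ?A $$ (i,j) * x ^ j)"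
    using i by (simp add: companion_mat_def scalar_prod_def row_def lessThan_atLeast0)
  also have "\<dots> = x * x ^ i"
  proof (cases "i + 1 < degree p")
    case True
    hence "(\<Sum>j<degree p. ?A $$ (i,j) * x ^ j) = (\<Sum>j<degree p. if j = i + 1 then x ^ j else 0)"
      using i by (intro sum.cong) (auto simp: companion_mat_def)
    also have "\<dots> = x ^ (i+1)" using True by (simp add: sum.delta)
    finally show ?thesis by simp
  next
    case False
    hence last: "i = degree p - 1" using i by simp
    have "(\<Sum>j<degree p. ?A $$ (i,j) * x ^ j) = - (\<Sum>j<degree p. coeff p j * x ^ j)"
      using i False by (auto simp: companion_mat_def sum_negf)
    also have "(\<Sum>j<degree p. coeff p j * x ^ j) = - (x ^ degree p)"
    proof -
      have "0 = poly p x" using p by simp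
      also have "\<dots> = (\<Sum>j\<le>degree p. coeff p j * x ^ j)" by (simp add: poly_altdef)
      also have "\<dots> = (\<Sum>j<degree p. coeff p j * x ^ j) + x ^ degree p"
        using p(1) by (simp add: lessThan_Suc_atMost[symmetric])
      finally show ?thesis by (simp add: eq_neg_iff_add_eq_0)
    qed
    finally show ?thesis using last i by (simp add: power_Suc[symmetric])
  qed
  finally show "(?A *\<^sub>v ?v) $ i = (x \<cdot>\<^sub>v ?v) $ i" using i by simp
qed (simp add: companion_mat_def)

lemma algebraic_int_eigenvector:
  fixes x :: complex
  assumes "algebraic_int x"
  shows "\<exists>n A v. A \<in> carrier_mat n n \<and> (\<forall>i<n. \<forall>j<n. A $$ (i,j) \<in> \<int>) \<and>
     v \<in> carrier_vec n \<and> v \<noteq> 0\<^sub>v n \<and> A *\<^sub>v v = x \<cdot>\<^sub>v v"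
proof -
  from assms obtain p where p: "lead_coeff p = 1" "\<forall>i. coeff p i \<in> \<int>" "poly p x = 0"
    by (auto simp: algebraic_int.simps)
  have deg: "degree p > 0"
  proof (rule ccontr)
    assume "\<not> degree p > 0"
    hence "poly p x = 1" using p(1) by (simp add: poly_altdef)
    thus False using p(3) by simp
  qed
  have "vec (degree p) (\<lambda>i. x ^ i) \<noteq> 0\<^sub>v (degree p)"
  proof
    assume "vec (degree p) (\<lambda>i. x ^ i) = 0\<^sub>v (degree p)"
    hence "vec (degree p) (\<lambda>i. x ^ i) $ 0 = 0\<^sub>v (degree p) $ 0" by simp
    thus False using deg by simp
  qed
  moreover have "\<forall>i<degree p. \<forall>j<degree p. companion_mat p $$ (i,j) \<in> \<int>"
    using p(2) by (auto simp: companion_mat_def)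
  ultimately show ?thesis using companion_mat_eigen[OF p(1,3)]
    by (intro exI[of _ "degree p"] exI[of _ "companion_mat p"] exI[of _ "vec (degree p) (\<lambda>i. x ^ i)"])
      (auto simp: companion_mat_def)
qed

lemma sum_index_div_mod:
  fixes f :: "nat \<Rightarrow> nat \<Rightarrow> 'a::comm_monoid_add"
  shows "(\<Sum>j<n*m. f (j div m) (j mod m)) = (\<Sum>a<n. \<Sum>b<m. f a b)"
proof (induction n)
  case (Suc n)
  have S: "{..<Suc n * m} = {..<n*m} \<union> {n*m..<n*m+m}" by auto
  have "(\<Sum>j<Suc n*m. f (j div m) (j mod m)) = (\<Sum>j\<in>{..<n*m} \<union> {n*m..<n*m+m}. f (j div m) (j mod m))"
    by (simp only: S)
  also have "\<dots> = (\<Sum>j<n*m. f (j div m) (j mod m)) + (\<Sum>j\<in>{n*m..<n*m+m}. f (j div m) (j mod m))"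
    by (rule sum.union_disjoint) auto
  also have "(\<Sum>j\<in>{n*m..<n*m+m}. f (j div m) (j mod m)) = (\<Sum>b<m. f n b)"
  proof -
    have "(\<Sum>j\<in>{n*m..<n*m+m}. f (j div m) (j mod m)) = (\<Sum>b<m. f ((b + n*m) div m) ((b + n*m) mod m))"
      by (rule sum.reindex_bij_witness[of _ "\<lambda>b. b + n*m" "\<lambda>j. j - n*m"]) auto
    also have "\<dots> = (\<Sum>b<m. f n b)" by (intro sum.cong) auto
    finally show ?thesis .
  qed
  finally show ?case using Suc by simp
qed simp

lemma index_div_mod_bounds:
  fixes i n m :: nat
  assumes "i < n * m"
  shows "i div m < n" "i mod m < m"
proof -
  show "i div m < n" using assms by (simp add: less_mult_imp_div_less)
  have "0 < m" using assms by (cases "m = 0") auto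
  thus "i mod m < m" by simp
qed

definition kron_mat :: "nat \<Rightarrow> complex mat \<Rightarrow> nat \<Rightarrow> complex mat \<Rightarrow> complex mat" where
  "kron_mat n A m B = mat (n*m) (n*m) (\<lambda>(i,j). A $$ (i div m, j div m) * B $$ (i mod m, j mod m))"

definition kron_vec :: "nat \<Rightarrow> complex vec \<Rightarrow> nat \<Rightarrow> complex vec \<Rightarrow> complex vec" where
  "kron_vec n u m v = vec (n*m) (\<lambda>i. u $ (i div m) * v $ (i mod m))"

lemma kron_mat_eigen:
  assumes A: "A \<in> carrier_mat n n" and B: "B \<in> carrier_mat m m"
    and u: "u \<in> carrier_vec n" and v: "v \<in> carrier_vec m"
    and eu: "A *\<^sub>v u = x \<cdot>\<^sub>v u" and ev: "B *\<^sub>v v = y \<cdot>\<^sub>v v"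
  shows "kron_mat n A m B *\<^sub>v kron_vec n u m v = (x*y) \<cdot>\<^sub>v kron_vec n u m v"
proof (rule eq_vecI)
  fix i assume "i < dim_vec ((x*y) \<cdot>\<^sub>v kron_vec n u m v)"
  hence i: "i < n*m" by (simp add: kron_vec_def)
  hence im: "i div m < n" "i mod m < m" by (simp_all add: index_div_mod_bounds)
  have "(kron_mat n A m B *\<^sub>v kron_vec n u m v) $ i = (\<Sum>j<n*m. A $$ (i div m, j div m) * B $$ (i mod m, j mod m) * (u $ (j div m) * v $ (j mod m)))"
    using i by (simp add: kron_mat_def kron_vec_def scalar_prod_def row_def lessThan_atLeast0)
  also have "\<dots> = (\<Sum>a<n. \<Sum>b<m. A $$ (i div m, a) * B $$ (i mod m, b) * (u $ a * v $ b))"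
    by (rule sum_index_div_mod)
  also have "\<dots> = (\<Sum>a<n. A $$ (i div m, a) * u $ a) * (\<Sum>b<m. B $$ (i mod m, b) * v $ b)"
    by (simp add: sum_product mult_ac)
  also have "(\<Sum>a<n. A $$ (i div m, a) * u $ a) = x * u $ (i div m)"
  proof -
    have "(A *\<^sub>v u) $ (i div m) = (\<Sum>a<n. A $$ (i div m, a) * u $ a)"
      using A u im by (simp add: scalar_prod_def row_def lessThan_atLeast0)
    thus ?thesis using eu im u by simp
  qed
  also have "(\<Sum>b<m. B $$ (i mod m, b) * v $ b) = y * v $ (i mod m)"
  proof -
    have "(B *\<^sub>v v) $ (i mod m) = (\<Sum>b<m. B $$ (i mod m, b) * v $ b)"
      using B v im by (simp add: scalar_prod_def row_def lessThan_atLeast0)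
    thus ?thesis using ev im v by simp
  qed
  finally show "(kron_mat n A m B *\<^sub>v kron_vec n u m v) $ i = ((x*y) \<cdot>\<^sub>v kron_vec n u m v) $ i"
    using i by (simp add: kron_vec_def)
qed (simp add: kron_mat_def kron_vec_def)

lemma kron_vec_nonzero:
  assumes u: "u \<in> carrier_vec n" "u \<noteq> 0\<^sub>v n" and v: "v \<in> carrier_vec m" "v \<noteq> 0\<^sub>v m"
  shows "kron_vec n u m v \<noteq> 0\<^sub>v (n*m)"
proof -
  obtain a where a: "a < n" "u $ a \<noteq> 0" using u by (metis eq_vecI carrier_vecD index_zero_vec(1,2))
  obtain b where b: "b < m" "v $ b \<noteq> 0" using v by (metis eq_vecI carrier_vecD index_zero_vec(1,2))
  have lt: "a*m + b < n*m"
  proof -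
    have "a*m + b < a*m + m" using b by simp
    also have "\<dots> = Suc a * m" by simp
    also have "\<dots> \<le> n * m" using a by (intro mult_right_mono) auto
    finally show ?thesis .
  qed
  have "(a*m+b) div m = a" "(a*m+b) mod m = b" using b by auto
  hence "kron_vec n u m v $ (a*m+b) \<noteq> 0" using lt a b by (simp add: kron_vec_def)
  thus ?thesis using lt by auto
qed

text \<open>Sums and products of algebraic integers are eigenvalues of the integer matrices
  A (x) 1 + 1 (x) B and A (x) B.\<close>

lemma algebraic_int_closed:
  fixes x y :: complex
  assumes "algebraic_int x" "algebraic_int y"
  shows "algebraic_int (x*y)" "algebraic_int (x+y)"
proof -
  obtain n A u where Au: "A \<in> carrier_mat n n" "\<forall>i<n. \<forall>j<n. A $$ (i,j) \<in> \<int>"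
     "u \<in> carrier_vec n" "u \<noteq> 0\<^sub>v n" "A *\<^sub>v u = x \<cdot>\<^sub>v u"
    using algebraic_int_eigenvector[OF assms(1)] by blast
  obtain m B v where Bv: "B \<in> carrier_mat m m" "\<forall>i<m. \<forall>j<m. B $$ (i,j) \<in> \<int>"
     "v \<in> carrier_vec m" "v \<noteq> 0\<^sub>v m" "B *\<^sub>v v = y \<cdot>\<^sub>v v"
    using algebraic_int_eigenvector[OF assms(2)] by blast
  have w: "kron_vec n u m v \<in> carrier_vec (n*m)" "kron_vec n u m v \<noteq> 0\<^sub>v (n*m)"
    using kron_vec_nonzero[OF Au(3,4) Bv(3,4)] by (auto simp: kron_vec_def)
  have K: "\<And>A B. A \<in> carrier_mat n n \<Longrightarrow> B \<in> carrier_mat m m \<Longrightarrow> (\<forall>i<n. \<forall>j<n. A $$ (i,j) \<in> \<int>) \<Longrightarrow>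
       (\<forall>i<m. \<forall>j<m. B $$ (i,j) \<in> \<int>) \<Longrightarrow> (\<And>i j. i < n*m \<Longrightarrow> j < n*m \<Longrightarrow> kron_mat n A m B $$ (i,j) \<in> \<int>)"
    using index_div_mod_bounds by (auto simp: kron_mat_def)
  have carr: "kron_mat n A m B \<in> carrier_mat (n*m) (n*m)" by (simp add: kron_mat_def)
  show "algebraic_int (x*y)"
    by (rule algebraic_int_eigenvalue[OF carr K[OF Au(1) Bv(1) Au(2) Bv(2)] w(1,2) kron_mat_eigen[OF Au(1) Bv(1) Au(3) Bv(3) Au(5) Bv(5)]])
  have I1: "1\<^sub>m m *\<^sub>v v = 1 \<cdot>\<^sub>v v" using Bv(3) by simp
  have I2: "1\<^sub>m n *\<^sub>v u = 1 \<cdot>\<^sub>v u" using Au(3) by simp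
  have e1: "kron_mat n A m (1\<^sub>m m) *\<^sub>v kron_vec n u m v = x \<cdot>\<^sub>v kron_vec n u m v"
    using kron_mat_eigen[OF Au(1) _ Au(3) Bv(3) Au(5) I1] by simp
  have e2: "kron_mat n (1\<^sub>m n) m B *\<^sub>v kron_vec n u m v = y \<cdot>\<^sub>v kron_vec n u m v"
    using kron_mat_eigen[OF _ Bv(1) Au(3) Bv(3) I2 Bv(5)] by simp
  have "(kron_mat n A m (1\<^sub>m m) + kron_mat n (1\<^sub>m n) m B) *\<^sub>v kron_vec n u m v = (x+y) \<cdot>\<^sub>v kron_vec n u m v"
    by (subst add_mult_distrib_mat_vec[of _ "n*m" "n*m"]) (use w e1 e2 in \<open>auto simp: kron_mat_def add_smult_distrib_vec\<close>)
  moreover have "\<And>i j. i < n*m \<Longrightarrow> j < n*m \<Longrightarrow> (kron_mat n A m (1\<^sub>m m) + kron_mat n (1\<^sub>m n) m B) $$ (i,j) \<in> \<int>"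
  proof -
    fix i j assume ij: "i < n*m" "j < n*m"
    have "kron_mat n A m (1\<^sub>m m) $$ (i,j) \<in> \<int>" by (rule K[OF Au(1) _ Au(2) _ ij]) auto
    moreover have "kron_mat n (1\<^sub>m n) m B $$ (i,j) \<in> \<int>" by (rule K[OF _ Bv(1) _ Bv(2) ij]) auto
    ultimately show "(kron_mat n A m (1\<^sub>m m) + kron_mat n (1\<^sub>m n) m B) $$ (i,j) \<in> \<int>"
      using ij by (simp add: kron_mat_def)
  qed
  ultimately show "algebraic_int (x+y)"
    by (intro algebraic_int_eigenvalue[of _ "n*m", OF _ _ w(1,2)]) (auto simp: kron_mat_def)
qed

lemmas algebraic_int_times = algebraic_int_closed(1)
  and algebraic_int_plus = algebraic_int_closed(2)

lemma algebraic_int_sum: "finite S \<Longrightarrow> (\<And>i. i \<in> S \<Longrightarrow> algebraic_int (f i :: complex)) \<Longrightarrow> algebraic_int (sum f S)"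
  by (induction S rule: finite_induct) (auto intro: algebraic_int_plus)

lemma algebraic_int_prod: "finite S \<Longrightarrow> (\<And>i. i \<in> S \<Longrightarrow> algebraic_int (f i :: complex)) \<Longrightarrow> algebraic_int (prod f S)"
  by (induction S rule: finite_induct) (auto intro: algebraic_int_times)

lemma algebraic_int_power: "algebraic_int (x::complex) \<Longrightarrow> algebraic_int (x ^ n)"
  by (induction n) (auto intro: algebraic_int_times)

lemma algebraic_int_poly:
  fixes p :: "complex poly"
  assumes "\<And>i. algebraic_int (coeff p i)" "algebraic_int x"
  shows "algebraic_int (poly p x)"
  unfolding poly_altdef using assms by (intro algebraic_int_sum algebraic_int_times algebraic_int_power) auto

context fixes L :: "complex set" assumes sf: "subfield_C L" begin

lemma sf_0: "0 \<in> L" and sf_1: "1 \<in> L"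
  and sf_add: "x \<in> L \<Longrightarrow> y \<in> L \<Longrightarrow> x + y \<in> L"
  and sf_mult: "x \<in> L \<Longrightarrow> y \<in> L \<Longrightarrow> x * y \<in> L"
  and sf_uminus: "x \<in> L \<Longrightarrow> - x \<in> L"
  and sf_inverse: "x \<in> L \<Longrightarrow> inverse x \<in> L"
  using sf by (auto simp: subfield_C_def)

lemma sf_diff: "x \<in> L \<Longrightarrow> y \<in> L \<Longrightarrow> x - y \<in> L"
  using sf_add[of x "-y"] sf_uminus[of y] by simp

lemma sf_divide: "x \<in> L \<Longrightarrow> y \<in> L \<Longrightarrow> x / y \<in> L"
  using sf_mult[of x "inverse y"] sf_inverse[of y] by (simp add: divide_inverse)

lemma sf_sum: "(\<And>i. i \<in> S \<Longrightarrow> f i \<in> L) \<Longrightarrow> sum f S \<in> L"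
  by (induction S rule: infinite_finite_induct) (auto intro: sf_add sf_0)

lemma sf_prod: "(\<And>i. i \<in> S \<Longrightarrow> f i \<in> L) \<Longrightarrow> prod f S \<in> L"
  by (induction S rule: infinite_finite_induct) (auto intro: sf_mult sf_1)

lemma sf_power: "x \<in> L \<Longrightarrow> x ^ n \<in> L"
  by (induction n) (auto intro: sf_mult sf_1)

lemma sf_of_nat: "of_nat n \<in> L"
  by (induction n) (auto intro: sf_add sf_0 sf_1)

lemma sf_of_int: "of_int n \<in> L"
  by (cases n rule: int_cases) (auto intro: sf_uminus sf_of_nat simp del: of_nat_Suc)

lemma sf_Rats: "x \<in> \<rat> \<Longrightarrow> x \<in> L"
  by (erule Rats_cases') (auto intro!: sf_divide sf_of_int)

end

context fixes L :: "complex set" and \<sigma> :: "complex \<Rightarrow> complex"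
  assumes sf: "subfield_C L" and emb: "\<sigma> \<in> complex_embeddings L" begin

lemma emb_add: "x \<in> L \<Longrightarrow> y \<in> L \<Longrightarrow> \<sigma> (x + y) = \<sigma> x + \<sigma> y"
  and emb_mult: "x \<in> L \<Longrightarrow> y \<in> L \<Longrightarrow> \<sigma> (x * y) = \<sigma> x * \<sigma> y"
  and emb_1: "\<sigma> 1 = 1"
  and emb_out: "x \<notin> L \<Longrightarrow> \<sigma> x = 0"
  using emb by (auto simp: complex_embeddings_def)

lemma emb_0: "\<sigma> 0 = 0"
  using emb_add[of 0 0] sf_0[OF sf] by simp

lemma emb_uminus: "x \<in> L \<Longrightarrow> \<sigma> (- x) = - \<sigma> x"
proof -
  assume x: "x \<in> L"
  have "\<sigma> x + \<sigma> (-x) = 0" using emb_add[of x "-x"] sf_uminus[OF sf, of x] emb_0 x by simp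
  thus ?thesis by (metis minus_unique)
qed

lemma emb_diff: "x \<in> L \<Longrightarrow> y \<in> L \<Longrightarrow> \<sigma> (x - y) = \<sigma> x - \<sigma> y"
  using emb_add[of x "-y"] emb_uminus[of y] sf_uminus[OF sf, of y] by simp

lemma emb_inverse: "x \<in> L \<Longrightarrow> \<sigma> (inverse x) = inverse (\<sigma> x)"
proof (cases "x = 0")
  case False
  assume x: "x \<in> L"
  have "\<sigma> x * \<sigma> (inverse x) = 1"
    using emb_mult[OF x sf_inverse[OF sf x]] False emb_1 by simp
  thus ?thesis by (simp add: inverse_unique)
qed (simp add: emb_0)

lemma emb_nz: "x \<in> L \<Longrightarrow> x \<noteq> 0 \<Longrightarrow> \<sigma> x \<noteq> 0"
  using emb_mult[of x "inverse x"] sf_inverse[OF sf, of x] emb_1 by force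

lemma emb_eq_0_iff: "x \<in> L \<Longrightarrow> \<sigma> x = 0 \<longleftrightarrow> x = 0"
  using emb_nz emb_0 by auto

lemma emb_divide: "x \<in> L \<Longrightarrow> y \<in> L \<Longrightarrow> \<sigma> (x / y) = \<sigma> x / \<sigma> y"
  using emb_mult[of x "inverse y"] emb_inverse[of y] sf_inverse[OF sf, of y] by (simp add: divide_inverse)

lemma emb_sum: "(\<And>i. i \<in> S \<Longrightarrow> f i \<in> L) \<Longrightarrow> \<sigma> (sum f S) = (\<Sum>i\<in>S. \<sigma> (f i))"
  by (induction S rule: infinite_finite_induct) (auto simp: emb_0 emb_add sf_sum[OF sf])

lemma emb_prod: "(\<And>i. i \<in> S \<Longrightarrow> f i \<in> L) \<Longrightarrow> \<sigma> (prod f S) = (\<Prod>i\<in>S. \<sigma> (f i))"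
  by (induction S rule: infinite_finite_induct) (auto simp: emb_1 emb_mult sf_prod[OF sf])

lemma emb_of_nat: "\<sigma> (of_nat n) = of_nat n"
  by (induction n) (auto simp: emb_0 emb_1 emb_add sf_of_nat[OF sf] sf_1[OF sf])

lemma emb_of_int: "\<sigma> (of_int n) = of_int n"
  by (cases n rule: int_cases) (auto simp: emb_uminus emb_of_nat sf_of_nat[OF sf] simp del: of_nat_Suc)

lemma emb_Rats: "x \<in> \<rat> \<Longrightarrow> \<sigma> x = x"
  by (erule Rats_cases') (auto simp: emb_divide emb_of_int sf_of_int[OF sf])

end

definition polyL :: "complex set \<Rightarrow> complex poly \<Rightarrow> bool" where
  "polyL L p \<longleftrightarrow> (\<forall>i. coeff p i \<in> L)"

lemma polyL_pCons: "polyL L (pCons a p) \<longleftrightarrow> a \<in> L \<and> polyL L p"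
  by (auto simp: polyL_def coeff_pCons split: nat.splits)

lemma polyL_mono: "L \<subseteq> M \<Longrightarrow> polyL L p \<Longrightarrow> polyL M p"
  by (auto simp: polyL_def)

context fixes L :: "complex set" assumes sf: "subfield_C L" begin

lemma polyL_0: "polyL L 0" and polyL_1: "polyL L 1"
  using sf_0[OF sf] sf_1[OF sf] by (auto simp: polyL_def coeff_1)

lemma polyL_add: "polyL L p \<Longrightarrow> polyL L q \<Longrightarrow> polyL L (p + q)"
  and polyL_diff: "polyL L p \<Longrightarrow> polyL L q \<Longrightarrow> polyL L (p - q)"
  and polyL_uminus: "polyL L p \<Longrightarrow> polyL L (- p)"
  using sf by (auto simp: polyL_def intro: sf_add sf_diff sf_uminus)

lemma polyL_mult: "polyL L p \<Longrightarrow> polyL L q \<Longrightarrow> polyL L (p * q)"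
  by (auto simp: polyL_def coeff_mult intro!: sf_sum[OF sf] sf_mult[OF sf])

lemma polyL_smult: "c \<in> L \<Longrightarrow> polyL L p \<Longrightarrow> polyL L (Polynomial.smult c p)"
  by (auto simp: polyL_def intro!: sf_mult[OF sf])

lemma polyL_monom: "c \<in> L \<Longrightarrow> polyL L (monom c n)"
  by (auto simp: polyL_def coeff_monom sf_0[OF sf])

lemma polyL_const: "c \<in> L \<Longrightarrow> polyL L [:c:]"
  by (auto simp: polyL_def coeff_pCons sf_0[OF sf] split: nat.splits)

lemma polyL_power: "polyL L p \<Longrightarrow> polyL L (p ^ n)"
  by (induction n) (auto intro: polyL_mult polyL_1)

lemma polyL_x: "polyL L [:0,1:]"
  by (auto simp: polyL_def coeff_pCons sf_0[OF sf] sf_1[OF sf] split: nat.splits)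

lemma polyL_pderiv: "polyL L p \<Longrightarrow> polyL L (pderiv p)"
  by (auto simp: polyL_def coeff_pderiv simp del: of_nat_Suc intro!: sf_mult[OF sf] sf_of_nat[OF sf])

lemma polyL_sum: "(\<And>i. i \<in> S \<Longrightarrow> polyL L (f i)) \<Longrightarrow> polyL L (sum f S)"
  by (induction S rule: infinite_finite_induct) (auto intro: polyL_add polyL_0)

lemma polyL_poly: "polyL L p \<Longrightarrow> x \<in> L \<Longrightarrow> poly p x \<in> L"
  by (induction p) (auto simp: polyL_pCons sf_0[OF sf] intro!: sf_add[OF sf] sf_mult[OF sf])

end

context fixes L :: "complex set" and \<sigma> :: "complex \<Rightarrow> complex"
  assumes sf: "subfield_C L" and emb: "\<sigma> \<in> complex_embeddings L" begin

lemma coeff_map_emb: "coeff (map_poly \<sigma> p) i = \<sigma> (coeff p i)"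
  by (rule coeff_map_poly) (rule emb_0[OF sf emb])

lemma map_emb_add: "polyL L p \<Longrightarrow> polyL L q \<Longrightarrow> map_poly \<sigma> (p + q) = map_poly \<sigma> p + map_poly \<sigma> q"
  by (rule poly_eqI) (simp add: coeff_map_emb polyL_def emb_add[OF sf emb])

lemma map_emb_diff: "polyL L p \<Longrightarrow> polyL L q \<Longrightarrow> map_poly \<sigma> (p - q) = map_poly \<sigma> p - map_poly \<sigma> q"
  by (rule poly_eqI) (simp add: coeff_map_emb polyL_def emb_diff[OF sf emb])

lemma map_emb_mult: "polyL L p \<Longrightarrow> polyL L q \<Longrightarrow> map_poly \<sigma> (p * q) = map_poly \<sigma> p * map_poly \<sigma> q"
  by (rule poly_eqI) (simp add: coeff_map_emb coeff_mult polyL_def emb_sum[OF sf emb] emb_mult[OF sf emb] sf_mult[OF sf])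

lemma map_emb_monom: "map_poly \<sigma> (monom c n) = monom (\<sigma> c) n"
  by (rule poly_eqI) (simp add: coeff_map_emb coeff_monom emb_0[OF sf emb])

lemma map_emb_const: "map_poly \<sigma> [:c:] = [:\<sigma> c:]"
  by (rule poly_eqI) (simp add: coeff_map_emb coeff_pCons emb_0[OF sf emb] split: nat.splits)

lemma map_emb_x: "map_poly \<sigma> [:0,1:] = [:0,1:]"
  by (rule poly_eqI) (simp add: coeff_map_emb coeff_pCons emb_0[OF sf emb] emb_1[OF sf emb] split: nat.splits)

lemma map_emb_pderiv: "polyL L p \<Longrightarrow> map_poly \<sigma> (pderiv p) = pderiv (map_poly \<sigma> p)"
  by (rule poly_eqI) (simp add: coeff_map_emb coeff_pderiv polyL_def emb_mult[OF sf emb] sf_of_nat[OF sf] emb_of_nat[OF sf emb] del: of_nat_Suc)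

lemma degree_map_emb: "polyL L p \<Longrightarrow> degree (map_poly \<sigma> p) = degree p"
proof -
  assume p: "polyL L p"
  have "\<forall>i. coeff (map_poly \<sigma> p) i = 0 \<longleftrightarrow> coeff p i = 0"
    using p by (simp add: coeff_map_emb polyL_def emb_eq_0_iff[OF sf emb])
  hence "\<forall>i. (coeff (map_poly \<sigma> p) i \<noteq> 0) = (coeff p i \<noteq> 0)" by blast
  thus ?thesis unfolding degree_def by simp
qed

lemma lead_coeff_map_emb: "polyL L p \<Longrightarrow> lead_coeff (map_poly \<sigma> p) = \<sigma> (lead_coeff p)"
  by (simp add: degree_map_emb coeff_map_emb)

lemma map_emb_eq_0_iff: "polyL L p \<Longrightarrow> map_poly \<sigma> p = 0 \<longleftrightarrow> p = 0"
  by (metis coeff_map_emb emb_eq_0_iff[OF sf emb] lead_coeff_map_emb leading_coeff_0_iff polyL_def)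

end

lemma emb_poly:
  assumes sf: "subfield_C M" and emb: "\<rho> \<in> complex_embeddings M"
    and LM: "L \<subseteq> M" and p: "polyL L p" and x: "x \<in> M"
  shows "\<rho> (poly p x) = poly (map_poly \<rho> p) (\<rho> x)"
  using p
proof (induction p)
  case (pCons a p)
  hence a: "a \<in> M" and pp: "polyL L p" using LM by (auto simp: polyL_pCons)
  have pM: "poly p x \<in> M" using polyL_poly[OF sf polyL_mono[OF LM pp] x] .
  have mp: "map_poly \<rho> (pCons a p) = pCons (\<rho> a) (map_poly \<rho> p)"
    by (rule Polynomial.map_poly_pCons) (rule emb_0[OF sf emb])
  show ?case
    using pCons.IH[OF pp] a pM x mp
    by (simp add: map_poly_pCons emb_0[OF sf emb] emb_add[OF sf emb] emb_mult[OF sf emb] sf_mult[OF sf])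
qed (simp add: emb_0[OF sf emb])

text \<open>One step of Gaussian elimination: a linear dependence among the vectors with the pivot
  vector j0 eliminated from the last coordinate yields one among the original vectors.\<close>

lemma linear_dependence_step:
  assumes sf: "subfield_C L" and J: "finite J" "j0 \<in> J" and pivot: "a j0 n \<noteq> 0"
    and aL: "\<forall>j\<in>J. \<forall>k<Suc n. a j k \<in> L"
    and c': "\<forall>j\<in>J - {j0}. c' j \<in> L" "\<exists>j\<in>J - {j0}. c' j \<noteq> 0"
      "\<forall>k<n. (\<Sum>j\<in>J - {j0}. c' j * (a j k - a j n / a j0 n * a j0 k)) = 0"
  shows "\<exists>c. (\<forall>j\<in>J. c j \<in> L) \<and> (\<exists>j\<in>J. c j \<noteq> 0) \<and> (\<forall>k<Suc n. (\<Sum>j\<in>J. c j * a j k) = 0)"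
proof -
  define J' where "J' = J - {j0}"
  define a' where "a' j k = a j k - a j n / a j0 n * a j0 k" for j k
  define s where "s = (\<Sum>i\<in>J'. c' i * a i n)"
  define c where "c j = (if j = j0 then - s / a j0 n else c' j)" for j
  have key: "(\<Sum>j\<in>J. c j * a j k) = (\<Sum>j\<in>J'. c' j * a' j k)" for k
  proof -
    have h0: "(\<Sum>j\<in>J. c j * a j k) = c j0 * a j0 k + (\<Sum>j\<in>J'. c j * a j k)"
      unfolding J'_def by (rule sum.remove[OF J])
    have h1: "(\<Sum>j\<in>J'. c j * a j k) = (\<Sum>j\<in>J'. c' j * a j k)"
      by (intro sum.cong) (auto simp: c_def J'_def)
    have h2: "(\<Sum>j\<in>J'. c' j * a' j k) = (\<Sum>j\<in>J'. c' j * a j k - c' j * a j n * (a j0 k / a j0 n))"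
      unfolding a'_def by (intro sum.cong refl) (simp add: field_simps)
    have h3: "(\<Sum>j\<in>J'. c' j * a j k - c' j * a j n * (a j0 k / a j0 n)) =
        (\<Sum>j\<in>J'. c' j * a j k) - s * (a j0 k / a j0 n)"
      unfolding s_def by (simp add: sum_subtractf sum_distrib_right sum_divide_distrib)
    have h4: "c j0 * a j0 k = - s * (a j0 k / a j0 n)" by (simp add: c_def)
    show ?thesis unfolding h0 h1 h2 h3 h4 by simp
  qed
  have "\<forall>k<Suc n. (\<Sum>j\<in>J. c j * a j k) = 0"
  proof (intro allI impI)
    fix k assume "k < Suc n"
    show "(\<Sum>j\<in>J. c j * a j k) = 0"
    proof (cases "k < n")
      case True thus ?thesis using key c'(3) by (simp add: a'_def J'_def)
    next
      case False
      hence "k = n" using \<open>k < Suc n\<close> by simp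
      have "\<And>j. a' j n = 0" using pivot by (simp add: a'_def)
      thus ?thesis unfolding key \<open>k = n\<close> by simp
    qed
  qed
  moreover have "\<forall>j\<in>J. c j \<in> L"
  proof
    fix j assume j: "j \<in> J"
    have sL: "s \<in> L" unfolding s_def
      using c'(1) aL by (intro sf_sum[OF sf] sf_mult[OF sf]) (auto simp: J'_def)
    have "a j0 n \<in> L" using aL J(2) by simp
    thus "c j \<in> L" using j c'(1) sL unfolding c_def J'_def
      by (cases "j = j0") (simp_all add: sf_divide[OF sf] sf_uminus[OF sf])
  qed
  moreover have "\<exists>j\<in>J. c j \<noteq> 0" using c'(2) unfolding c_def by auto
  ultimately show ?thesis by blast
qed

lemma linear_dependence:
  assumes sf: "subfield_C L"
  shows "finite J \<Longrightarrow> card J > n \<Longrightarrow> (\<forall>j\<in>J. \<forall>k<n. a j k \<in> L) \<Longrightarrow>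
    \<exists>c. (\<forall>j\<in>J. c j \<in> L) \<and> (\<exists>j\<in>J. c j \<noteq> 0) \<and> (\<forall>k<n. (\<Sum>j\<in>J. c j * a j k) = 0)"
proof (induction n arbitrary: J a)
  case 0
  then obtain j0 where j0: "j0 \<in> J" by (metis card.empty ex_in_conv less_irrefl)
  have "\<forall>j\<in>J. (if j = j0 then 1 else 0) \<in> L" using sf_0[OF sf] sf_1[OF sf] by simp
  moreover have "\<exists>j\<in>J. (if j = j0 then 1 else 0::complex) \<noteq> 0" using j0 by auto
  ultimately show ?case by (intro exI[of _ "\<lambda>j. if j = j0 then 1 else 0"]) simp
next
  case (Suc n)
  show ?case
  proof (cases "\<forall>j\<in>J. a j n = 0")
    case True
    have "card J > n" "\<forall>j\<in>J. \<forall>k<n. a j k \<in> L" using Suc.prems(2,3) by simp_all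
    from Suc.IH[OF Suc.prems(1) this] obtain c where c: "\<forall>j\<in>J. c j \<in> L" "\<exists>j\<in>J. c j \<noteq> 0"
      "\<forall>k<n. (\<Sum>j\<in>J. c j * a j k) = 0" by blast
    have "\<forall>k<Suc n. (\<Sum>j\<in>J. c j * a j k) = 0" using c(3) True by (auto simp: less_Suc_eq)
    thus ?thesis using c(1,2) by blast
  next
    case False
    then obtain j0 where j0: "j0 \<in> J" "a j0 n \<noteq> 0" by blast
    have card: "card (J - {j0}) > n" using Suc.prems(1,2) j0(1) by (simp add: card_Diff_singleton)
    have reduced: "\<forall>j\<in>J - {j0}. \<forall>k<n. a j k - a j n / a j0 n * a j0 k \<in> L"
    proof (intro ballI allI impI)
      fix j k assume "j \<in> J - {j0}" "k < n"
      hence "a j k \<in> L" "a j n \<in> L" "a j0 n \<in> L" "a j0 k \<in> L" using Suc.prems(3) j0(1) by auto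
      thus "a j k - a j n / a j0 n * a j0 k \<in> L" by (intro sf_diff[OF sf] sf_mult[OF sf] sf_divide[OF sf])
    qed
    from Suc.IH[OF _ card reduced] Suc.prems(1) obtain c' where "\<forall>j\<in>J - {j0}. c' j \<in> L"
      "\<exists>j\<in>J - {j0}. c' j \<noteq> 0" "\<forall>k<n. (\<Sum>j\<in>J - {j0}. c' j * (a j k - a j n / a j0 n * a j0 k)) = 0"
      by blast
    thus ?thesis by (rule linear_dependence_step[OF sf Suc.prems(1) j0 Suc.prems(3)])
  qed
qed

lemma coeff_sum_monom: "finite J \<Longrightarrow> coeff (\<Sum>j\<in>J. monom (c j) j) k = (if k \<in> J then c k else 0)"
  by (simp add: coeff_sum coeff_monom)

lemma poly_sum_monom: "poly (\<Sum>j\<in>J. monom (c j) j) x = (\<Sum>j\<in>J. c j * x ^ j :: complex)"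
  by (simp add: poly_sum Polynomial.poly_monom)

lemma power_dependence:
  assumes sf: "subfield_C L"
    and a: "\<And>j k. j \<le> n \<Longrightarrow> k < n \<Longrightarrow> a j k \<in> L"
    and span: "\<And>j. j \<le> n \<Longrightarrow> y ^ j = (\<Sum>k<n. a j k * b k)"
  shows "\<exists>h. polyL L h \<and> h \<noteq> 0 \<and> degree h \<le> n \<and> poly h y = 0"
proof -
  have "\<exists>c. (\<forall>j\<in>{0..n}. c j \<in> L) \<and> (\<exists>j\<in>{0..n}. c j \<noteq> 0) \<and>
      (\<forall>k<n. (\<Sum>j\<in>{0..n}. c j * a j k) = 0)"
    by (rule linear_dependence[OF sf]) (use a in auto)
  then obtain c where c: "\<forall>j\<in>{0..n}. c j \<in> L" "\<exists>j\<in>{0..n}. c j \<noteq> 0"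
      "\<forall>k<n. (\<Sum>j\<in>{0..n}. c j * a j k) = 0" by blast
  define h where "h = (\<Sum>j\<in>{0..n}. monom (c j) j)"
  have coeff_h: "coeff h k = (if k \<in> {0..n} then c k else 0)" for k
    unfolding h_def by (simp add: coeff_sum_monom)
  have "polyL L h" unfolding h_def using c(1) by (intro polyL_sum[OF sf] polyL_monom[OF sf]) auto
  moreover have "h \<noteq> 0"
  proof
    assume "h = 0"
    obtain j where "j \<in> {0..n}" "c j \<noteq> 0" using c(2) by blast
    thus False using coeff_h[of j] \<open>h = 0\<close> by simp
  qed
  moreover have "degree h \<le> n" using coeff_h by (intro degree_le) auto
  moreover have "poly h y = 0"
  proof -
    have "poly h y = (\<Sum>j\<in>{0..n}. c j * y ^ j)" by (simp add: h_def poly_sum_monom)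
    also have "\<dots> = (\<Sum>j\<in>{0..n}. \<Sum>k<n. c j * a j k * b k)"
      by (intro sum.cong refl) (simp add: span sum_distrib_left mult.assoc)
    also have "\<dots> = (\<Sum>k<n. (\<Sum>j\<in>{0..n}. c j * a j k) * b k)"
      by (subst sum.swap) (simp add: sum_distrib_right)
    also have "\<dots> = 0" using c(3) by simp
    finally show ?thesis .
  qed
  ultimately show ?thesis by blast
qed

lemma poly_as_sum_less:
  fixes q :: "'a::comm_semiring_1 poly"
  assumes "q = 0 \<or> degree q < e"
  shows "poly q x = (\<Sum>k<e. coeff q k * x ^ k)"
proof (cases "q = 0")
  case False
  hence d: "degree q < e" using assms by simp
  have "poly q x = (\<Sum>k\<le>degree q. coeff q k * x ^ k)" by (simp add: poly_altdef)
  also have "\<dots> = (\<Sum>k<e. coeff q k * x ^ k)"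
  proof (rule sum.mono_neutral_left)
    show "\<forall>i\<in>{..<e} - {..degree q}. coeff q i * x ^ i = 0" by (auto simp: coeff_eq_0)
  qed (use d in auto)
  finally show ?thesis .
qed simp

lemma card_roots_rsquarefree:
  fixes p :: "complex poly"
  assumes "p \<noteq> 0" "\<forall>a. \<not> (poly p a = 0 \<and> poly (pderiv p) a = 0)"
  shows "card {x. poly p x = 0} = degree p"
  using assms
proof (induction "degree p" arbitrary: p rule: less_induct)
  case less
  show ?case
  proof (cases "degree p = 0")
    case True
    then obtain c where "p = [:c:]" by (metis degree_eq_zeroE)
    with less.prems True show ?thesis by simp
  next
    case False
    have "\<not> constant (poly p)" using False constant_degree[of p] by simp
    then obtain r where r: "poly p r = 0"
      using fundamental_theorem_of_algebra by blast
    then obtain q where q: "p = [:-r,1:] * q" by (metis poly_eq_0_iff_dvd dvdE)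
    have q0: "q \<noteq> 0" using less.prems q by auto
    have dpq: "degree p = Suc (degree q)"
    proof -
      have "degree ([:-r,1:] * q) = degree [:-r,1:] + degree q" by (rule degree_mult_eq) (use q0 in auto)
      thus ?thesis using q by simp
    qed
    hence dq: "degree q < degree p" by simp
    have pd0: "pderiv p = [:-r,1:] * pderiv q + q * pderiv [:-r,1:]" by (simp only: q pderiv_mult)
    have "pderiv [:-r,1:] = 1" by (simp add: pderiv_pCons)
    hence pd: "pderiv p = q + [:-r,1:] * pderiv q" using pd0 by simp
    have qr: "poly q r \<noteq> 0" using less.prems(2) r pd by (auto)
    have sq: "\<forall>a. \<not> (poly q a = 0 \<and> poly (pderiv q) a = 0)"
    proof (intro allI notI)
      fix a assume "poly q a = 0 \<and> poly (pderiv q) a = 0"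
      hence "poly p a = 0 \<and> poly (pderiv p) a = 0" using q pd by simp
      thus False using less.prems(2) by blast
    qed
    have "{x. poly p x = 0} = insert r {x. poly q x = 0}" using q r by auto
    hence "card {x. poly p x = 0} = Suc (card {x. poly q x = 0})"
      using qr poly_roots_finite[OF q0] by simp
    also have "card {x. poly q x = 0} = degree q" using less.hyps[OF dq q0 sq] .
    also have "Suc (degree q) = degree p" using dpq by simp
    finally show ?thesis .
  qed
qed

text \<open>The matrix of multiplication by g on C[x]/(p) in the basis 1, x, ..., x^(deg p - 1).
  If p has deg p distinct roots r, its determinant is the product of the values g(r).\<close>

definition mult_mat :: "complex poly \<Rightarrow> complex poly \<Rightarrow> complex mat" where
  "mult_mat p g = mat (degree p) (degree p) (\<lambda>(j,k). coeff ((monom 1 j * g) mod p) k)"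

lemma mult_mat_carrier: "mult_mat p g \<in> carrier_mat (degree p) (degree p)"
  by (simp add: mult_mat_def)

lemma poly_mod_root: "poly p r = 0 \<Longrightarrow> poly (q mod p) r = poly q (r::complex)"
proof -
  assume "poly p r = 0"
  have "poly q r = poly (q div p * p + q mod p) r" by (simp only: div_mult_mod_eq)
  also have "\<dots> = poly (q mod p) r" unfolding poly_add poly_mult using \<open>poly p r = 0\<close> by simp
  finally show ?thesis by (rule sym)
qed

lemma det_mat_diag: "Determinant.det (mat_diag n f) = (\<Prod>i<n. f i)"
proof -
  have "Determinant.det (mat_diag n f) = prod_list (diag_mat (mat_diag n f))"
    by (rule det_upper_triangular[of _ n]) (auto simp: mat_diag_def)
  also have "\<dots> = (\<Prod>i = 0..<n. mat_diag n f $$ (i,i))" by (simp add: prod_list_diag_prod mat_diag_def)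
  also have "\<dots> = (\<Prod>i<n. f i)" by (simp add: mat_diag_def atLeast0LessThan)
  finally show ?thesis .
qed

text \<open>The Vandermonde matrix of pairwise distinct points is nonsingular: a vector in the kernel of
  its transpose gives a polynomial of degree below e with e distinct roots.\<close>

lemma vandermonde_det_nonzero:
  fixes r :: "nat \<Rightarrow> complex"
  assumes inj: "inj_on r {0..<e}"
  shows "Determinant.det (mat e e (\<lambda>(k,i). r i ^ k)) \<noteq> 0" (is "Determinant.det ?V \<noteq> 0")
proof
  have Vc: "?V \<in> carrier_mat e e" by simp
  assume "Determinant.det ?V = 0"
  hence "Determinant.det (transpose_mat ?V) = 0" using det_transpose[OF Vc] by simp
  then obtain w where w: "w \<in> carrier_vec e" "w \<noteq> 0\<^sub>v e" "transpose_mat ?V *\<^sub>v w = 0\<^sub>v e"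
    using det_0_iff_vec_prod_zero[of "transpose_mat ?V" e] Vc by auto
  define h where "h = (\<Sum>k<e. monom (w $ k) k)"
  have coeff_h: "coeff h k = (if k < e then w $ k else 0)" for k
    by (simp add: h_def coeff_sum coeff_monom)
  have root: "poly h (r i) = 0" if i: "i < e" for i
  proof -
    have "poly h (r i) = (\<Sum>k<e. w $ k * r i ^ k)" by (simp add: h_def poly_sum poly_monom)
    also have "\<dots> = (transpose_mat ?V *\<^sub>v w) $ i"
      using i w(1) by (simp add: scalar_prod_def row_def atLeast0LessThan mult.commute)
    finally show ?thesis using w(3) i by simp
  qed
  have "h = 0"
  proof (rule ccontr)
    assume h0: "h \<noteq> 0"
    hence "coeff h (degree h) \<noteq> 0" by simp
    hence "degree h < e" using coeff_h[of "degree h"] by (auto split: if_splits)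
    moreover have "r ` {0..<e} \<subseteq> {x. poly h x = 0}" using root by auto
    hence "card (r ` {0..<e}) \<le> card {x. poly h x = 0}" by (rule card_mono[OF poly_roots_finite[OF h0]])
    hence "e \<le> card {x. poly h x = 0}" using card_image[OF inj] by simp
    ultimately show False using card_poly_roots_bound[OF h0] by linarith
  qed
  have "\<forall>k<e. w $ k = 0"
  proof (intro allI impI)
    fix k assume "k < e"
    thus "w $ k = 0" using coeff_h[of k] \<open>h = 0\<close> by simp
  qed
  hence "w = 0\<^sub>v e" using w(1) by (intro eq_vecI) auto
  thus False using w(2) by simp
qed

lemma det_mult_mat:
  fixes p g :: "complex poly"
  assumes p0: "p \<noteq> 0" and card: "card {x. poly p x = 0} = degree p"
  shows "Determinant.det (mult_mat p g) = (\<Prod>r\<in>{x. poly p x = 0}. poly g r)"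
proof -
  define R where "R = {x. poly p x = 0}"
  define e where "e = degree p"
  have fR: "finite R" unfolding R_def using poly_roots_finite[OF p0] .
  obtain rr where rr: "bij_betw rr {0..<e} R" using ex_bij_betw_nat_finite[OF fR] card
    unfolding R_def e_def by metis
  have rrR: "\<And>i. i < e \<Longrightarrow> poly p (rr i) = 0" using rr unfolding bij_betw_def R_def by auto
  define V where "V = mat e e (\<lambda>(k,i). rr i ^ k)"
  define D where "D = mat_diag e (\<lambda>i. poly g (rr i))"
  have Mc: "mult_mat p g \<in> carrier_mat e e" by (simp add: mult_mat_def e_def)
  have Vc: "V \<in> carrier_mat e e" by (simp add: V_def)
  have Dc: "D \<in> carrier_mat e e" by (simp add: D_def)
  have MV: "mult_mat p g * V = V * D"
  proof (rule eq_matI)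
    fix j i assume j: "j < dim_row (V * D)" and i: "i < dim_col (V * D)"
    hence ji: "j < e" "i < e" using Vc Dc by auto
    have "(mult_mat p g * V) $$ (j,i) = (\<Sum>k<e. coeff ((monom 1 j * g) mod p) k * rr i ^ k)"
      using ji by (simp add: mult_mat_def V_def e_def scalar_prod_def row_def col_def atLeast0LessThan)
    also have "\<dots> = poly ((monom 1 j * g) mod p) (rr i)"
      by (rule poly_as_sum_less[symmetric]) (use degree_mod_less[OF p0] in \<open>auto simp: e_def\<close>)
    also have "\<dots> = rr i ^ j * poly g (rr i)"
      using poly_mod_root[OF rrR[OF ji(2)]] by (simp add: poly_monom)
    also have "\<dots> = (V * D) $$ (j,i)"
      unfolding D_def mat_diag_mult_right[OF Vc] using ji by (simp add: V_def)
    finally show "(mult_mat p g * V) $$ (j,i) = (V * D) $$ (j,i)" .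
  qed (use Mc Vc Dc in auto)
  have dV: "Determinant.det V \<noteq> 0"
    unfolding V_def by (rule vandermonde_det_nonzero[OF bij_betw_imp_inj_on[OF rr]])
  have e1: "Determinant.det (mult_mat p g * V) = Determinant.det (mult_mat p g) * Determinant.det V" by (rule det_mult[OF Mc Vc])
  have e2: "Determinant.det (V * D) = Determinant.det V * Determinant.det D" by (rule det_mult[OF Vc Dc])
  have "Determinant.det (mult_mat p g) * Determinant.det V = Determinant.det (V * D)" using e1 MV by simp
  also have "\<dots> = Determinant.det D * Determinant.det V" using e2 by (simp add: mult.commute)
  finally have "Determinant.det (mult_mat p g) * Determinant.det V = Determinant.det D * Determinant.det V" .
  hence "Determinant.det (mult_mat p g) = Determinant.det D" using dV by simp
  also have "\<dots> = (\<Prod>i<e. poly g (rr i))" by (simp add: D_def det_mat_diag)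
  also have "\<dots> = (\<Prod>r\<in>R. poly g r)"
    using prod.reindex_bij_betw[OF rr, of "poly g"] by (simp add: atLeast0LessThan)
  finally show ?thesis unfolding R_def .
qed

section \<open>Minimal polynomials and simple extensions\<close>

definition min_poly :: "complex set \<Rightarrow> complex \<Rightarrow> complex poly \<Rightarrow> bool" where
  "min_poly L \<beta> \<mu> \<longleftrightarrow> polyL L \<mu> \<and> lead_coeff \<mu> = 1 \<and> poly \<mu> \<beta> = 0 \<and>
     (\<forall>g. polyL L g \<longrightarrow> g \<noteq> 0 \<longrightarrow> poly g \<beta> = 0 \<longrightarrow> degree \<mu> \<le> degree g)"

lemma division_by_monic:
  assumes sf: "subfield_C L" and mu: "polyL L \<mu>" and lc: "lead_coeff \<mu> = 1"
  shows "polyL L p \<Longrightarrow> \<exists>q r. polyL L q \<and> polyL L r \<and> p = q * \<mu> + r \<and> (r = 0 \<or> degree r < degree \<mu>)"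
proof (induction "degree p" arbitrary: p rule: less_induct)
  case less
  show ?case
  proof (cases "p = 0 \<or> degree p < degree \<mu>")
    case True
    thus ?thesis using less.prems polyL_0[OF sf] by (intro exI[of _ 0] exI[of _ p]) auto
  next
    case False
    hence p0: "p \<noteq> 0" and dmp: "degree \<mu> \<le> degree p" by auto
    define k where "k = degree p - degree \<mu>"
    define m where "m = monom (lead_coeff p) k"
    define p' where "p' = p - m * \<mu>"
    have lpL: "lead_coeff p \<in> L" using less.prems by (simp add: polyL_def)
    have mL: "polyL L m" unfolding m_def by (rule polyL_monom[OF sf lpL])
    have p'L: "polyL L p'" unfolding p'_def by (intro polyL_diff[OF sf] polyL_mult[OF sf] less.prems mL mu)
    have c: "coeff p' (degree p) = 0"
    proof -
      have "coeff (m * \<mu>) (degree p) = lead_coeff p * coeff \<mu> (degree p - k)"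
        using dmp by (simp add: m_def coeff_monom_mult k_def)
      also have "degree p - k = degree \<mu>" using dmp by (simp add: k_def)
      finally show ?thesis using lc by (simp add: p'_def)
    qed
    have dm: "degree (m * \<mu>) \<le> degree p"
    proof -
      have "degree (m * \<mu>) \<le> degree m + degree \<mu>" by (rule degree_mult_le)
      also have "degree m \<le> k" unfolding m_def by (rule degree_monom_le)
      hence "degree m + degree \<mu> \<le> degree p" using dmp by (simp add: k_def)
      finally show ?thesis .
    qed
    have dle: "degree p' \<le> degree p" unfolding p'_def by (rule degree_diff_le) (auto simp: dm)
    show ?thesis
    proof (cases "p' = 0")
      case True
      hence "p = m * \<mu> + 0" by (simp add: p'_def)
      thus ?thesis using mL polyL_0[OF sf] by blast
    next
      case False
      hence "coeff p' (degree p') \<noteq> 0" by simp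
      hence "degree p' \<noteq> degree p" using c by metis
      hence "degree p' < degree p" using dle by simp
      from less.hyps[OF this p'L] obtain q r where qr: "polyL L q" "polyL L r" "p' = q * \<mu> + r"
        "r = 0 \<or> degree r < degree \<mu>" by blast
      have "p = (q + m) * \<mu> + r" using qr(3) by (simp add: p'_def algebra_simps)
      thus ?thesis using qr polyL_add[OF sf qr(1) mL] by blast
    qed
  qed
qed

lemma min_poly_exists:
  assumes sf: "subfield_C L" and h: "polyL L h" "h \<noteq> 0" "poly h \<beta> = 0"
  shows "\<exists>\<mu>. min_poly L \<beta> \<mu>"
proof -
  define P where "P n \<longleftrightarrow> (\<exists>g. polyL L g \<and> g \<noteq> 0 \<and> poly g \<beta> = 0 \<and> degree g = n)" for n
  have "P (degree h)" using h unfolding P_def by blast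
  hence "P (LEAST n. P n)" by (rule LeastI)
  then obtain g where g: "polyL L g" "g \<noteq> 0" "poly g \<beta> = 0" "degree g = (LEAST n. P n)"
    unfolding P_def by blast
  define \<mu> where "\<mu> = Polynomial.smult (inverse (lead_coeff g)) g"
  have lg1: "lead_coeff g \<in> L" using g(1) by (simp add: polyL_def)
  have lg2: "lead_coeff g \<noteq> 0" using g(2) by simp
  note lg = lg1 lg2
  have "polyL L \<mu>" unfolding \<mu>_def by (rule polyL_smult[OF sf sf_inverse[OF sf lg(1)] g(1)])
  moreover have "lead_coeff \<mu> = 1" using lg by (simp add: \<mu>_def)
  moreover have "poly \<mu> \<beta> = 0" using g by (simp add: \<mu>_def)
  moreover have "degree \<mu> = degree g" using lg by (simp add: \<mu>_def)
  moreover have "\<forall>f. polyL L f \<longrightarrow> f \<noteq> 0 \<longrightarrow> poly f \<beta> = 0 \<longrightarrow> degree g \<le> degree f"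
    using g(4) by (auto simp: P_def intro: Least_le)
  ultimately show ?thesis unfolding min_poly_def by metis
qed

lemma min_poly_exists_algebraic:
  assumes sf: "subfield_C L" and alg: "algebraic \<beta>"
  shows "\<exists>\<mu>. min_poly L \<beta> \<mu>"
proof -
  obtain h where h: "\<forall>i. coeff h i \<in> \<rat>" "h \<noteq> 0" "poly h \<beta> = 0"
    using alg unfolding algebraic_altdef by blast
  have "polyL L h" using h(1) sf_Rats[OF sf] by (auto simp: polyL_def)
  thus ?thesis using min_poly_exists[OF sf _ h(2,3)] by blast
qed

text \<open>The inverse of a nonzero y that is algebraic over L is a polynomial in y over L: if the
  minimal polynomial of y is a0 + x * nu'(x), then a0 is nonzero and 1/y = - nu'(y) / a0.\<close>

lemma inverse_as_poly:
  assumes sf: "subfield_C L" and h: "polyL L h" "h \<noteq> 0" "poly h y = 0" and y: "y \<noteq> 0"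
  shows "\<exists>q. polyL L q \<and> inverse y = poly q y"
proof -
  from min_poly_exists[OF sf h] obtain \<nu> where "min_poly L y \<nu>" by blast
  hence \<nu>L: "polyL L \<nu>" and \<nu>_monic: "lead_coeff \<nu> = 1" and \<nu>_root: "poly \<nu> y = 0"
    and \<nu>_min: "\<And>g. polyL L g \<Longrightarrow> g \<noteq> 0 \<Longrightarrow> poly g y = 0 \<Longrightarrow> degree \<nu> \<le> degree g"
    by (auto simp: min_poly_def)
  obtain a0 \<nu>' where \<nu>': "\<nu> = pCons a0 \<nu>'" by (cases \<nu>) auto
  have a0L: "a0 \<in> L" and \<nu>'L: "polyL L \<nu>'" using \<nu>L \<nu>' by (auto simp: polyL_pCons)
  have a0: "a0 \<noteq> 0"
  proof
    assume "a0 = 0"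
    have n0: "\<nu>' \<noteq> 0" using \<nu>_monic \<nu>' \<open>a0 = 0\<close> by auto
    have "y * poly \<nu>' y = 0" using \<nu>_root \<nu>' \<open>a0 = 0\<close> by simp
    hence "poly \<nu>' y = 0" using y by simp
    from \<nu>_min[OF \<nu>'L n0 this] have "degree \<nu> \<le> degree \<nu>'" .
    moreover have "degree \<nu> = Suc (degree \<nu>')" using \<nu>' n0 by simp
    ultimately show False by simp
  qed
  have "a0 + y * poly \<nu>' y = 0" using \<nu>_root \<nu>' by simp
  hence y\<nu>': "y * poly \<nu>' y = - a0" by (simp add: eq_neg_iff_add_eq_0 add.commute)
  have "y * (- inverse a0 * poly \<nu>' y) = - inverse a0 * (y * poly \<nu>' y)" by (simp add: mult_ac)
  also have "\<dots> = 1" using a0 y\<nu>' by simp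
  finally have "inverse y = - inverse a0 * poly \<nu>' y" by (rule inverse_unique)
  hence "inverse y = poly (Polynomial.smult (- inverse a0) \<nu>') y" by simp
  moreover have "polyL L (Polynomial.smult (- inverse a0) \<nu>')"
    by (intro polyL_smult[OF sf] sf_uminus[OF sf] sf_inverse[OF sf] a0L \<nu>'L)
  ultimately show ?thesis by blast
qed

text \<open>The values g(beta) of polynomials over L; this set turns out to be the field L(beta).\<close>

definition poly_vals :: "complex set \<Rightarrow> complex \<Rightarrow> complex set" where
  "poly_vals L \<beta> = {poly g \<beta> | g. polyL L g}"

context fixes L \<beta> \<mu> assumes sf: "subfield_C L" and mp: "min_poly L \<beta> \<mu>" begin

lemma min_poly_coeffs: "polyL L \<mu>" and min_poly_monic: "lead_coeff \<mu> = 1" and min_poly_root: "poly \<mu> \<beta> = 0"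
  and min_poly_minimal: "polyL L g \<Longrightarrow> g \<noteq> 0 \<Longrightarrow> poly g \<beta> = 0 \<Longrightarrow> degree \<mu> \<le> degree g"
  using mp by (auto simp: min_poly_def)

lemma min_poly_degree_pos: "degree \<mu> > 0"
proof (rule ccontr)
  assume "\<not> degree \<mu> > 0"
  hence "poly \<mu> \<beta> = 1" using min_poly_monic by (simp add: poly_altdef)
  thus False using min_poly_root by simp
qed

lemma min_poly_no_smaller: "polyL L g \<Longrightarrow> poly g \<beta> = 0 \<Longrightarrow> g = 0 \<or> degree g < degree \<mu> \<Longrightarrow> g = 0"
  using min_poly_minimal[of g] by fastforce

lemma min_poly_reduce: "polyL L g \<Longrightarrow> \<exists>r. polyL L r \<and> (r = 0 \<or> degree r < degree \<mu>) \<and> poly r \<beta> = poly g \<beta>"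
proof -
  assume g: "polyL L g"
  from division_by_monic[OF sf min_poly_coeffs min_poly_monic g] obtain q r where qr: "polyL L q" "polyL L r" "g = q * \<mu> + r"
    "r = 0 \<or> degree r < degree \<mu>" by blast
  have "poly g \<beta> = poly r \<beta>" using qr(3) min_poly_root by simp
  thus ?thesis using qr by metis
qed

lemma min_poly_dvd: "polyL L g \<Longrightarrow> poly g \<beta> = 0 \<Longrightarrow> \<exists>q. polyL L q \<and> g = q * \<mu>"
proof -
  assume g: "polyL L g" "poly g \<beta> = 0"
  from division_by_monic[OF sf min_poly_coeffs min_poly_monic g(1)] obtain q r where qr: "polyL L q" "polyL L r" "g = q * \<mu> + r"
    "r = 0 \<or> degree r < degree \<mu>" by blast
  have "poly r \<beta> = 0" using qr(3) min_poly_root g(2) by simp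
  hence "r = 0" using min_poly_no_smaller[OF qr(2)] qr(4) by blast
  thus ?thesis using qr by auto
qed

lemma min_poly_span: "polyL L g \<Longrightarrow> \<exists>c. (\<forall>k. c k \<in> L) \<and> poly g \<beta> = (\<Sum>k<degree \<mu>. c k * \<beta> ^ k)"
proof -
  assume g: "polyL L g"
  from min_poly_reduce[OF g] obtain r where r: "polyL L r" "r = 0 \<or> degree r < degree \<mu>" "poly r \<beta> = poly g \<beta>"
    by blast
  have "poly g \<beta> = (\<Sum>k<degree \<mu>. coeff r k * \<beta> ^ k)" using r(3) poly_as_sum_less[OF r(2)] by simp
  thus ?thesis using r(1) by (auto simp: polyL_def)
qed

lemma polyL_mod_min_poly: "polyL L p \<Longrightarrow> polyL L (p mod \<mu>)"
proof -
  assume p: "polyL L p"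
  from division_by_monic[OF sf min_poly_coeffs min_poly_monic p] obtain q r where
    qr: "polyL L q" "polyL L r" "p = q * \<mu> + r" "r = 0 \<or> degree r < degree \<mu>" by blast
  have "p mod \<mu> = (r + q * \<mu>) mod \<mu>" using qr(3) by (simp add: add.commute)
  also have "\<dots> = r" using qr(4) by (auto intro: mod_poly_less)
  finally show ?thesis using qr(2) by simp
qed

text \<open>The values g(beta) are closed under the ring operations; inverses exist because the minimal
  polynomial of a nonzero y over L has a nonzero constant term.\<close>

lemma poly_vals_add: "x \<in> poly_vals L \<beta> \<Longrightarrow> y \<in> poly_vals L \<beta> \<Longrightarrow> x + y \<in> poly_vals L \<beta>"
proof -
  assume "x \<in> poly_vals L \<beta>" "y \<in> poly_vals L \<beta>"
  then obtain g h where gh: "polyL L g" "x = poly g \<beta>" "polyL L h" "y = poly h \<beta>" unfolding poly_vals_def by blast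
  have "x + y = poly (g + h) \<beta>" using gh by simp
  thus ?thesis unfolding poly_vals_def using polyL_add[OF sf gh(1,3)] by blast
qed

lemma poly_vals_mult: "x \<in> poly_vals L \<beta> \<Longrightarrow> y \<in> poly_vals L \<beta> \<Longrightarrow> x * y \<in> poly_vals L \<beta>"
proof -
  assume "x \<in> poly_vals L \<beta>" "y \<in> poly_vals L \<beta>"
  then obtain g h where gh: "polyL L g" "x = poly g \<beta>" "polyL L h" "y = poly h \<beta>" unfolding poly_vals_def by blast
  have "x * y = poly (g * h) \<beta>" using gh by simp
  thus ?thesis unfolding poly_vals_def using polyL_mult[OF sf gh(1,3)] by blast
qed

lemma poly_vals_uminus: "x \<in> poly_vals L \<beta> \<Longrightarrow> - x \<in> poly_vals L \<beta>"
proof -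
  assume "x \<in> poly_vals L \<beta>"
  then obtain g where gh: "polyL L g" "x = poly g \<beta>" unfolding poly_vals_def by blast
  have "- x = poly (- g) \<beta>" using gh by simp
  thus ?thesis unfolding poly_vals_def using polyL_uminus[OF sf gh(1)] by blast
qed

lemma poly_vals_const: "x \<in> L \<Longrightarrow> x \<in> poly_vals L \<beta>"
proof -
  assume x: "x \<in> L"
  have "x = poly [:x:] \<beta>" by simp
  thus ?thesis unfolding poly_vals_def using polyL_const[OF sf x] by blast
qed

lemma poly_vals_gen: "\<beta> \<in> poly_vals L \<beta>"
proof -
  have "\<beta> = poly [:0,1:] \<beta>" by simp
  thus ?thesis unfolding poly_vals_def using polyL_x[OF sf] by blast
qed

lemma poly_vals_poly: "polyL L p \<Longrightarrow> x \<in> poly_vals L \<beta> \<Longrightarrow> poly p x \<in> poly_vals L \<beta>"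
proof (induction p)
  case 0 thus ?case using poly_vals_const[OF sf_0[OF sf]] by simp
next
  case (pCons a p)
  hence "a \<in> L" "polyL L p" by (auto simp: polyL_pCons)
  thus ?case using pCons by (simp add: poly_vals_add poly_vals_mult poly_vals_const)
qed

lemma poly_vals_inverse: "y \<in> poly_vals L \<beta> \<Longrightarrow> inverse y \<in> poly_vals L \<beta>"
proof (cases "y = 0")
  case True thus ?thesis using poly_vals_const[OF sf_0[OF sf]] by simp
next
  case False
  assume y: "y \<in> poly_vals L \<beta>"
  then obtain g where g: "polyL L g" "y = poly g \<beta>" unfolding poly_vals_def by blast
  have "\<forall>j. \<exists>c. (\<forall>k. c k \<in> L) \<and> y ^ j = (\<Sum>k<degree \<mu>. c k * \<beta> ^ k)"
  proof
    fix j
    have "y ^ j = poly (g ^ j) \<beta>" using g by (simp add: poly_power)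
    thus "\<exists>c. (\<forall>k. c k \<in> L) \<and> y ^ j = (\<Sum>k<degree \<mu>. c k * \<beta> ^ k)"
      using min_poly_span[OF polyL_power[OF sf g(1)]] by metis
  qed
  then obtain a where "\<And>j k. a j k \<in> L" "\<And>j. y ^ j = (\<Sum>k<degree \<mu>. a j k * \<beta> ^ k)" by metis
  then have "\<exists>h. polyL L h \<and> h \<noteq> 0 \<and> degree h \<le> degree \<mu> \<and> poly h y = 0"
    by (intro power_dependence[OF sf, of "degree \<mu>" a y "\<lambda>k. \<beta> ^ k"]) auto
  then obtain h where h: "polyL L h" "h \<noteq> 0" "poly h y = 0" by blast
  obtain q where "polyL L q" "inverse y = poly q y" using inverse_as_poly[OF sf h False] by blast
  thus ?thesis using poly_vals_poly y by simp
qed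

lemma poly_vals_subfield: "subfield_C (poly_vals L \<beta>)"
  unfolding subfield_C_def using poly_vals_const[OF sf_0[OF sf]] poly_vals_const[OF sf_1[OF sf]]
  by (auto intro: poly_vals_add poly_vals_mult poly_vals_uminus poly_vals_inverse)

text \<open>Hence L(beta) consists exactly of the values g(beta), and its degree over L is deg mu:
  the powers of beta below deg mu span it, and fewer elements cannot, by linear dependence.\<close>

lemma adjoin_eq: "adjoin L \<beta> = poly_vals L \<beta>"
proof
  show "adjoin L \<beta> \<subseteq> poly_vals L \<beta>"
    unfolding adjoin_def using poly_vals_subfield poly_vals_const poly_vals_gen by (intro Inter_lower) auto
  show "poly_vals L \<beta> \<subseteq> adjoin L \<beta>"
  proof
    fix x assume "x \<in> poly_vals L \<beta>"
    then obtain g where g: "polyL L g" "x = poly g \<beta>" unfolding poly_vals_def by blast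
    show "x \<in> adjoin L \<beta>" unfolding adjoin_def
    proof
      fix M assume "M \<in> {M. subfield_C M \<and> L \<subseteq> M \<and> \<beta> \<in> M}"
      hence M: "subfield_C M" "L \<subseteq> M" "\<beta> \<in> M" by auto
      show "x \<in> M" using polyL_poly[OF M(1) polyL_mono[OF M(2) g(1)] M(3)] g(2) by simp
    qed
  qed
qed

lemma adjoin_subfield: "subfield_C (adjoin L \<beta>)"
  using poly_vals_subfield adjoin_eq by simp

lemma L_sub_adjoin: "L \<subseteq> adjoin L \<beta>" and beta_adjoin: "\<beta> \<in> adjoin L \<beta>"
  using poly_vals_const poly_vals_gen adjoin_eq by auto

lemma ext_degree_adjoin: "ext_degree (adjoin L \<beta>) L = degree \<mu>"
  unfolding ext_degree_def
proof (rule Least_equality)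
  define e where "e = degree \<mu>"
  show "\<exists>b. (\<forall>i<degree \<mu>. b i \<in> adjoin L \<beta>) \<and>
      adjoin L \<beta> \<subseteq> {\<Sum>i<degree \<mu>. c i * b i | c. \<forall>i<degree \<mu>. c i \<in> L}"
  proof (intro exI[of _ "\<lambda>i. \<beta> ^ i"] conjI allI impI subsetI)
    fix i show "\<beta> ^ i \<in> adjoin L \<beta>"
      using adjoin_subfield beta_adjoin by (simp add: sf_power)
  next
    fix x assume "x \<in> adjoin L \<beta>"
    then obtain g where g: "polyL L g" "x = poly g \<beta>" unfolding adjoin_eq poly_vals_def by blast
    from min_poly_span[OF g(1)] g(2) show "x \<in> {\<Sum>i<degree \<mu>. c i * \<beta> ^ i | c. \<forall>i<degree \<mu>. c i \<in> L}"
      by blast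
  qed
next
  fix n :: nat assume "\<exists>b. (\<forall>i<n. b i \<in> adjoin L \<beta>) \<and> adjoin L \<beta> \<subseteq> {\<Sum>i<n. c i * b i | c. \<forall>i<n. c i \<in> L}"
  then obtain b where b: "\<forall>i<n. b i \<in> adjoin L \<beta>"
    "adjoin L \<beta> \<subseteq> {\<Sum>i<n. c i * b i | c. \<forall>i<n. c i \<in> L}" by blast
  show "degree \<mu> \<le> n"
  proof (rule ccontr)
    assume "\<not> degree \<mu> \<le> n"
    hence ne: "n < degree \<mu>" by simp
    have "\<forall>j. \<exists>c. (\<forall>i<n. c i \<in> L) \<and> \<beta> ^ j = (\<Sum>i<n. c i * b i)"
    proof
      fix j
      have "\<beta> ^ j \<in> adjoin L \<beta>" using adjoin_subfield beta_adjoin by (simp add: sf_power)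
      thus "\<exists>c. (\<forall>i<n. c i \<in> L) \<and> \<beta> ^ j = (\<Sum>i<n. c i * b i)" using b(2) by blast
    qed
    then obtain cc where cc: "\<And>j i. i < n \<Longrightarrow> cc j i \<in> L" "\<And>j. \<beta> ^ j = (\<Sum>i<n. cc j i * b i)"
      by metis
    then have "\<exists>h. polyL L h \<and> h \<noteq> 0 \<and> degree h \<le> n \<and> poly h \<beta> = 0"
      by (intro power_dependence[OF sf, of n cc \<beta> b]) auto
    then obtain h where h: "polyL L h" "h \<noteq> 0" "degree h \<le> n" "poly h \<beta> = 0" by blast
    thus False using min_poly_no_smaller[OF h(1,4)] ne by simp
  qed
qed

end

section \<open>Extensions of embeddings to a simple extension\<close>

definition extensions :: "complex set \<Rightarrow> complex set \<Rightarrow> (complex \<Rightarrow> complex) \<Rightarrow> (complex \<Rightarrow> complex) set" where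
  "extensions K L \<sigma> = {\<rho> \<in> complex_embeddings K. \<forall>x\<in>L. \<rho> x = \<sigma> x}"

lemma restriction_is_emb:
  assumes sfL: "subfield_C L" and "L \<subseteq> M" "\<rho> \<in> complex_embeddings M"
  shows "(\<lambda>x. if x \<in> L then \<rho> x else 0) \<in> complex_embeddings L"
  using assms sf_add[OF sfL] sf_mult[OF sfL] sf_1[OF sfL] unfolding complex_embeddings_def by (auto simp: subset_iff)

lemma det_in_sf:
  assumes sf: "subfield_C L" and A: "A \<in> carrier_mat n n" and AL: "\<And>i j. i < n \<Longrightarrow> j < n \<Longrightarrow> A $$ (i,j) \<in> L"
  shows "Determinant.det A \<in> L"
  unfolding det_def'[OF A]
proof (intro sf_sum[OF sf] sf_mult[OF sf] sf_of_int[OF sf] sf_prod[OF sf])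
  fix p i assume "p \<in> {p. p permutes {0..<n}}" "i \<in> {0..<n}"
  thus "A $$ (i, p i) \<in> L" using AL by (auto simp: permutes_def)
qed

lemma emb_det:
  assumes sf: "subfield_C L" and emb: "\<sigma> \<in> complex_embeddings L"
    and A: "A \<in> carrier_mat n n" and AL: "\<And>i j. i < n \<Longrightarrow> j < n \<Longrightarrow> A $$ (i,j) \<in> L"
  shows "\<sigma> (Determinant.det A) = Determinant.det (map_mat \<sigma> A)"
proof -
  have pin: "\<And>p i. p permutes {0..<n} \<Longrightarrow> i \<in> {0..<n} \<Longrightarrow> p i < n"
    by (metis atLeastLessThan_iff permutes_in_image)
  have Ap: "\<And>p i. p permutes {0..<n} \<Longrightarrow> i \<in> {0..<n} \<Longrightarrow> A $$ (i, p i) \<in> L"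
    using AL pin by auto
  have "\<sigma> (Determinant.det A) = (\<Sum>p\<in>{p. p permutes {0..<n}}. \<sigma> (of_int (sign p) * (\<Prod>i = 0..<n. A $$ (i, p i))))"
    unfolding det_def'[OF A] using Ap
    by (intro emb_sum[OF sf emb] sf_mult[OF sf] sf_of_int[OF sf] sf_prod[OF sf]) auto
  also have "\<dots> = (\<Sum>p\<in>{p. p permutes {0..<n}}. of_int (sign p) * (\<Prod>i = 0..<n. \<sigma> (A $$ (i, p i))))"
  proof (intro sum.cong refl)
    fix p assume "p \<in> {p. p permutes {0..<n}}"
    hence in1: "\<And>i. i \<in> {0..<n} \<Longrightarrow> A $$ (i, p i) \<in> L" using Ap by auto
    hence in2: "(\<Prod>i = 0..<n. A $$ (i, p i)) \<in> L" by (rule sf_prod[OF sf])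
    have "\<sigma> (of_int (sign p) * (\<Prod>i = 0..<n. A $$ (i, p i))) = \<sigma> (of_int (sign p)) * \<sigma> (\<Prod>i = 0..<n. A $$ (i, p i))"
      by (rule emb_mult[OF sf emb sf_of_int[OF sf] in2])
    also have "\<dots> = of_int (sign p) * (\<Prod>i = 0..<n. \<sigma> (A $$ (i, p i)))"
      using emb_of_int[OF sf emb] emb_prod[OF sf emb, of "{0..<n}" "\<lambda>i. A $$ (i, p i)"] in1 by simp
    finally show "\<sigma> (of_int (sign p) * (\<Prod>i = 0..<n. A $$ (i, p i))) = of_int (sign p) * (\<Prod>i = 0..<n. \<sigma> (A $$ (i, p i)))" .
  qed
  also have "\<dots> = Determinant.det (map_mat \<sigma> A)"
  proof -
    have mA: "map_mat \<sigma> A \<in> carrier_mat n n" using A by simp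
    show ?thesis unfolding det_def'[OF mA] using A pin
      by (intro sum.cong refl arg_cong2[where f = "(*)"] prod.cong) auto
  qed
  finally show ?thesis .
qed

lemma mult_mat_in_L:
  assumes sf: "subfield_C L" and mp: "min_poly L \<beta> \<mu>" and g: "polyL L g"
    and ij: "i < degree \<mu>" "j < degree \<mu>"
  shows "mult_mat \<mu> g $$ (i, j) \<in> L"
proof -
  have "polyL L (monom 1 i * g)" by (intro polyL_mult[OF sf] polyL_monom[OF sf] sf_1[OF sf] g)
  hence "polyL L ((monom 1 i * g) mod \<mu>)" by (rule polyL_mod_min_poly[OF sf mp])
  thus ?thesis using ij by (simp add: mult_mat_def polyL_def)
qed

text \<open>The candidate extension of sigma to L(beta) sending beta to r: g(beta) is mapped to
  sigma(g)(r), for a chosen polynomial g over L; this is well defined when r is a root of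
  sigma(mu).\<close>

definition conj_ext :: "complex set \<Rightarrow> complex \<Rightarrow> (complex \<Rightarrow> complex) \<Rightarrow> complex \<Rightarrow> complex \<Rightarrow> complex"
  where "conj_ext L \<beta> \<sigma> r x =
    (if x \<in> adjoin L \<beta> then poly (map_poly \<sigma> (SOME g. polyL L g \<and> poly g \<beta> = x)) r else 0)"

text \<open>For a fixed embedding sigma of L, an extension rho to L(beta) is determined by rho(beta), which
  must be a root of sigma(mu); conversely every such root r gives the extension g(beta) to
  sigma(g)(r).  As sigma(mu) is squarefree there are exactly deg mu extensions, and the product
  of rho(g(beta)) over them is sigma of the determinant of the multiplication matrix.\<close>

context fixes L \<beta> \<mu> \<sigma> assumes sf: "subfield_C L" and mp: "min_poly L \<beta> \<mu>"
  and emb: "\<sigma> \<in> complex_embeddings L" begin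

lemma ext_map_poly: "\<rho> \<in> extensions (adjoin L \<beta>) L \<sigma> \<Longrightarrow> polyL L g \<Longrightarrow> map_poly \<rho> g = map_poly \<sigma> g"
proof (rule poly_eqI)
  fix n assume r: "\<rho> \<in> extensions (adjoin L \<beta>) L \<sigma>" and g: "polyL L g"
  have re: "\<rho> \<in> complex_embeddings (adjoin L \<beta>)" using r by (simp add: extensions_def)
  show "coeff (map_poly \<rho> g) n = coeff (map_poly \<sigma> g) n"
    using r g by (simp add: coeff_map_emb[OF adjoin_subfield[OF sf mp] re] coeff_map_emb[OF sf emb] extensions_def polyL_def)
qed

lemma ext_poly_value: "\<rho> \<in> extensions (adjoin L \<beta>) L \<sigma> \<Longrightarrow> polyL L g \<Longrightarrow> \<rho> (poly g \<beta>) = poly (map_poly \<sigma> g) (\<rho> \<beta>)"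
proof -
  assume r: "\<rho> \<in> extensions (adjoin L \<beta>) L \<sigma>" and g: "polyL L g"
  have re: "\<rho> \<in> complex_embeddings (adjoin L \<beta>)" using r by (simp add: extensions_def)
  show ?thesis using emb_poly[OF adjoin_subfield[OF sf mp] re L_sub_adjoin[OF sf mp] g beta_adjoin[OF sf mp]] ext_map_poly[OF r g] by simp
qed

lemma ext_root: "\<rho> \<in> extensions (adjoin L \<beta>) L \<sigma> \<Longrightarrow> poly (map_poly \<sigma> \<mu>) (\<rho> \<beta>) = 0"
proof -
  assume r: "\<rho> \<in> extensions (adjoin L \<beta>) L \<sigma>"
  have re: "\<rho> \<in> complex_embeddings (adjoin L \<beta>)" using r by (simp add: extensions_def)
  have "poly (map_poly \<sigma> \<mu>) (\<rho> \<beta>) = \<rho> (poly \<mu> \<beta>)" using ext_poly_value[OF r min_poly_coeffs[OF sf mp]] by simp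
  also have "\<dots> = 0" using min_poly_root[OF sf mp] emb_0[OF adjoin_subfield[OF sf mp] re] by simp
  finally show ?thesis .
qed

lemma ext_inj: "\<rho>1 \<in> extensions (adjoin L \<beta>) L \<sigma> \<Longrightarrow> \<rho>2 \<in> extensions (adjoin L \<beta>) L \<sigma> \<Longrightarrow> \<rho>1 \<beta> = \<rho>2 \<beta> \<Longrightarrow> \<rho>1 = \<rho>2"
proof (rule ext)
  fix x assume r: "\<rho>1 \<in> extensions (adjoin L \<beta>) L \<sigma>" "\<rho>2 \<in> extensions (adjoin L \<beta>) L \<sigma>" "\<rho>1 \<beta> = \<rho>2 \<beta>"
  show "\<rho>1 x = \<rho>2 x"
  proof (cases "x \<in> adjoin L \<beta>")
    case True
    then obtain g where g: "polyL L g" "x = poly g \<beta>" unfolding adjoin_eq[OF sf mp] poly_vals_def by blast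
    show ?thesis using ext_poly_value[OF r(1) g(1)] ext_poly_value[OF r(2) g(1)] r(3) g(2) by simp
  next
    case False
    thus ?thesis using r emb_out by (auto simp: extensions_def complex_embeddings_def)
  qed
qed

lemma conj_root_of_annihilator: "poly (map_poly \<sigma> \<mu>) r = 0 \<Longrightarrow> polyL L g \<Longrightarrow> poly g \<beta> = 0 \<Longrightarrow> poly (map_poly \<sigma> g) r = 0"
proof -
  assume r: "poly (map_poly \<sigma> \<mu>) r = 0" and g: "polyL L g" "poly g \<beta> = 0"
  from min_poly_dvd[OF sf mp g] obtain q where q: "polyL L q" "g = q * \<mu>" by blast
  have "map_poly \<sigma> g = map_poly \<sigma> q * map_poly \<sigma> \<mu>"
    using q map_emb_mult[OF sf emb q(1) min_poly_coeffs[OF sf mp]] by simp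
  thus ?thesis using r by simp
qed

lemma conj_ext_poly:
  assumes r: "poly (map_poly \<sigma> \<mu>) r = 0" and g: "polyL L g"
  shows "conj_ext L \<beta> \<sigma> r (poly g \<beta>) = poly (map_poly \<sigma> g) r"
proof -
  define G where "G = (SOME h. polyL L h \<and> poly h \<beta> = poly g \<beta>)"
  have "poly g \<beta> \<in> adjoin L \<beta>" unfolding adjoin_eq[OF sf mp] poly_vals_def using g by blast
  hence ext: "conj_ext L \<beta> \<sigma> r (poly g \<beta>) = poly (map_poly \<sigma> G) r" by (simp add: conj_ext_def G_def)
  have "\<exists>h. polyL L h \<and> poly h \<beta> = poly g \<beta>" using g by blast
  hence G: "polyL L G" "poly G \<beta> = poly g \<beta>" unfolding G_def by (metis (mono_tags, lifting) someI_ex)+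
  have "poly (map_poly \<sigma> (g - G)) r = 0"
    by (rule conj_root_of_annihilator[OF r polyL_diff[OF sf g G(1)]]) (simp add: G(2))
  thus ?thesis using ext map_emb_diff[OF sf emb g G(1)] by simp
qed

lemma ext_exists: "poly (map_poly \<sigma> \<mu>) r = 0 \<Longrightarrow> \<exists>\<rho>\<in>extensions (adjoin L \<beta>) L \<sigma>. \<rho> \<beta> = r"
proof -
  assume r: "poly (map_poly \<sigma> \<mu>) r = 0"
  define \<rho> where "\<rho> = conj_ext L \<beta> \<sigma> r"
  note key = conj_ext_poly[OF r, folded \<rho>_def]
  have inK: "x \<in> adjoin L \<beta> \<Longrightarrow> \<exists>g. polyL L g \<and> x = poly g \<beta>" for x
    unfolding adjoin_eq[OF sf mp] poly_vals_def by blast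
  have "\<rho> \<in> complex_embeddings (adjoin L \<beta>)"
    unfolding complex_embeddings_def
  proof (intro CollectI conjI ballI allI impI)
    fix x y assume "x \<in> adjoin L \<beta>" "y \<in> adjoin L \<beta>"
    then obtain g h where gh: "polyL L g" "x = poly g \<beta>" "polyL L h" "y = poly h \<beta>" using inK by blast
    have "\<rho> (x + y) = \<rho> (poly (g + h) \<beta>)" using gh by simp
    also have "\<dots> = poly (map_poly \<sigma> (g + h)) r" by (rule key[OF polyL_add[OF sf gh(1,3)]])
    also have "\<dots> = \<rho> x + \<rho> y" using gh key by (simp add: map_emb_add[OF sf emb])
    finally show "\<rho> (x + y) = \<rho> x + \<rho> y" .
    have "\<rho> (x * y) = \<rho> (poly (g * h) \<beta>)" using gh by simp
    also have "\<dots> = poly (map_poly \<sigma> (g * h)) r" by (rule key[OF polyL_mult[OF sf gh(1,3)]])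
    also have "\<dots> = \<rho> x * \<rho> y" using gh key by (simp add: map_emb_mult[OF sf emb])
    finally show "\<rho> (x * y) = \<rho> x * \<rho> y" .
  next
    have "\<rho> 1 = poly (map_poly \<sigma> 1) r" using key[OF polyL_1[OF sf]] by simp
    thus "\<rho> 1 = 1" using emb_1[OF sf emb] by simp
  next
    fix x assume "x \<notin> adjoin L \<beta>" thus "\<rho> x = 0" by (simp add: \<rho>_def conj_ext_def)
  qed
  moreover have "\<rho> x = \<sigma> x" if x: "x \<in> L" for x
    using key[OF polyL_const[OF sf x]] by (simp add: map_emb_const[OF sf emb])
  moreover have "\<rho> \<beta> = r" using key[OF polyL_x[OF sf]] by (simp add: map_emb_x[OF sf emb])
  ultimately show ?thesis unfolding extensions_def by blast
qed

lemma map_min_poly_nonzero: "map_poly \<sigma> \<mu> \<noteq> 0" and degree_map_min_poly: "degree (map_poly \<sigma> \<mu>) = degree \<mu>"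
  using map_emb_eq_0_iff[OF sf emb min_poly_coeffs[OF sf mp]] degree_map_emb[OF sf emb min_poly_coeffs[OF sf mp]] min_poly_monic[OF sf mp]
  by auto

lemma map_min_poly_sqfree: "\<forall>a. \<not> (poly (map_poly \<sigma> \<mu>) a = 0 \<and> poly (pderiv (map_poly \<sigma> \<mu>)) a = 0)"
proof (intro allI notI)
  fix a assume a: "poly (map_poly \<sigma> \<mu>) a = 0 \<and> poly (pderiv (map_poly \<sigma> \<mu>)) a = 0"
  from ext_exists a obtain \<rho> where r: "\<rho> \<in> extensions (adjoin L \<beta>) L \<sigma>" "\<rho> \<beta> = a" by blast
  have re: "\<rho> \<in> complex_embeddings (adjoin L \<beta>)" using r by (simp add: extensions_def)
  have dL: "polyL L (pderiv \<mu>)" by (rule polyL_pderiv[OF sf min_poly_coeffs[OF sf mp]])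
  have "\<rho> (poly (pderiv \<mu>) \<beta>) = poly (map_poly \<sigma> (pderiv \<mu>)) a" using ext_poly_value[OF r(1) dL] r(2) by simp
  also have "\<dots> = 0" using a map_emb_pderiv[OF sf emb min_poly_coeffs[OF sf mp]] by simp
  finally have "\<rho> (poly (pderiv \<mu>) \<beta>) = 0" .
  moreover have "poly (pderiv \<mu>) \<beta> \<in> adjoin L \<beta>" using polyL_poly[OF adjoin_subfield[OF sf mp] polyL_mono[OF L_sub_adjoin[OF sf mp] dL] beta_adjoin[OF sf mp]] .
  ultimately have "poly (pderiv \<mu>) \<beta> = 0" using emb_eq_0_iff[OF adjoin_subfield[OF sf mp] re] by simp
  moreover have "degree (pderiv \<mu>) < degree \<mu>" using min_poly_degree_pos[OF sf mp] by (simp add: degree_pderiv)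
  ultimately have "pderiv \<mu> = 0" using min_poly_no_smaller[OF sf mp dL] by blast
  thus False using min_poly_degree_pos[OF sf mp] by (simp add: pderiv_eq_0_iff)
qed

lemma card_roots_map_min_poly: "card {x. poly (map_poly \<sigma> \<mu>) x = 0} = degree \<mu>"
  using card_roots_rsquarefree[OF map_min_poly_nonzero map_min_poly_sqfree] degree_map_min_poly by simp

lemma ext_bij: "bij_betw (\<lambda>\<rho>. \<rho> \<beta>) (extensions (adjoin L \<beta>) L \<sigma>) {x. poly (map_poly \<sigma> \<mu>) x = 0}"
  unfolding bij_betw_def inj_on_def
  using ext_inj ext_root ext_exists by (auto simp: image_def) blast

lemma card_extensions: "card (extensions (adjoin L \<beta>) L \<sigma>) = degree \<mu>"
  using bij_betw_same_card[OF ext_bij] card_roots_map_min_poly by simp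

lemma finite_extensions: "finite (extensions (adjoin L \<beta>) L \<sigma>)"
  using bij_betw_finite[OF ext_bij] poly_roots_finite[OF map_min_poly_nonzero] by simp

lemma map_emb_mod: "polyL L p \<Longrightarrow> map_poly \<sigma> (p mod \<mu>) = map_poly \<sigma> p mod map_poly \<sigma> \<mu>"
proof -
  assume p: "polyL L p"
  from division_by_monic[OF sf min_poly_coeffs[OF sf mp] min_poly_monic[OF sf mp] p] obtain q r where qr: "polyL L q" "polyL L r"
    "p = q * \<mu> + r" "r = 0 \<or> degree r < degree \<mu>" by blast
  have "p mod \<mu> = r"
  proof -
    have "p mod \<mu> = (r + q * \<mu>) mod \<mu>" using qr(3) by (simp add: add.commute)
    also have "\<dots> = r mod \<mu>" by (rule mod_mult_self1)
    also have "\<dots> = r" using qr(4) by (auto intro: mod_poly_less)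
    finally show ?thesis .
  qed
  moreover have "map_poly \<sigma> p mod map_poly \<sigma> \<mu> = map_poly \<sigma> r"
  proof -
    have "map_poly \<sigma> p = map_poly \<sigma> r + map_poly \<sigma> q * map_poly \<sigma> \<mu>"
      using qr(3) map_emb_add[OF sf emb polyL_mult[OF sf qr(1) min_poly_coeffs[OF sf mp]] qr(2)]
        map_emb_mult[OF sf emb qr(1) min_poly_coeffs[OF sf mp]] by (simp add: add.commute)
    hence "map_poly \<sigma> p mod map_poly \<sigma> \<mu> = map_poly \<sigma> r mod map_poly \<sigma> \<mu>" by simp
    also have "\<dots> = map_poly \<sigma> r"
      using qr(4) degree_map_emb[OF sf emb qr(2)] degree_map_min_poly by (auto intro: mod_poly_less)
    finally show ?thesis .
  qed
  ultimately show ?thesis by simp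
qed

lemma prod_extensions_det: "polyL L g \<Longrightarrow> (\<Prod>\<rho>\<in>extensions (adjoin L \<beta>) L \<sigma>. \<rho> (poly g \<beta>)) = \<sigma> (Determinant.det (mult_mat \<mu> g))"
proof -
  assume g: "polyL L g"
  have "(\<Prod>\<rho>\<in>extensions (adjoin L \<beta>) L \<sigma>. \<rho> (poly g \<beta>)) = (\<Prod>\<rho>\<in>extensions (adjoin L \<beta>) L \<sigma>. poly (map_poly \<sigma> g) (\<rho> \<beta>))"
    using ext_poly_value[OF _ g] by simp
  also have "\<dots> = (\<Prod>x\<in>{x. poly (map_poly \<sigma> \<mu>) x = 0}. poly (map_poly \<sigma> g) x)"
    using prod.reindex_bij_betw[OF ext_bij, of "poly (map_poly \<sigma> g)"] by simp
  also have "\<dots> = Determinant.det (mult_mat (map_poly \<sigma> \<mu>) (map_poly \<sigma> g))"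
    by (rule det_mult_mat[symmetric]) (use map_min_poly_nonzero card_roots_map_min_poly degree_map_min_poly in auto)
  also have "mult_mat (map_poly \<sigma> \<mu>) (map_poly \<sigma> g) = map_mat \<sigma> (mult_mat \<mu> g)"
  proof (rule eq_matI)
    fix j k assume jk: "j < dim_row (map_mat \<sigma> (mult_mat \<mu> g))" "k < dim_col (map_mat \<sigma> (mult_mat \<mu> g))"
    have pj: "polyL L (monom 1 j * g)" by (intro polyL_mult[OF sf] polyL_monom[OF sf] sf_1[OF sf] g)
    have "map_poly \<sigma> ((monom 1 j * g) mod \<mu>) = (monom 1 j * map_poly \<sigma> g) mod map_poly \<sigma> \<mu>"
      using map_emb_mod[OF pj] map_emb_mult[OF sf emb polyL_monom[OF sf sf_1[OF sf]] g]
      by (simp add: map_emb_monom[OF sf emb] emb_1[OF sf emb])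
    hence "coeff ((monom 1 j * map_poly \<sigma> g) mod map_poly \<sigma> \<mu>) k = \<sigma> (coeff ((monom 1 j * g) mod \<mu>) k)"
      by (metis coeff_map_emb[OF sf emb])
    thus "mult_mat (map_poly \<sigma> \<mu>) (map_poly \<sigma> g) $$ (j, k) = map_mat \<sigma> (mult_mat \<mu> g) $$ (j, k)"
      using jk by (simp add: mult_mat_def degree_map_min_poly)
  qed (simp_all add: mult_mat_def degree_map_min_poly)
  also have "Determinant.det (map_mat \<sigma> (mult_mat \<mu> g)) = \<sigma> (Determinant.det (mult_mat \<mu> g))"
    by (rule emb_det[OF sf emb mult_mat_carrier mult_mat_in_L[OF sf mp g], symmetric])
  finally show ?thesis .
qed

end

definition restrict_cemb :: "complex set \<Rightarrow> (complex \<Rightarrow> complex) \<Rightarrow> complex \<Rightarrow> complex" where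
  "restrict_cemb L \<rho> = (\<lambda>x. if x \<in> L then \<rho> x else 0)"

lemma det_mult_mat_in_L:
  assumes sf: "subfield_C L" and mp: "min_poly L \<beta> \<mu>" and g: "polyL L g"
  shows "Determinant.det (mult_mat \<mu> g) \<in> L"
  by (rule det_in_sf[OF sf mult_mat_carrier mult_mat_in_L[OF sf mp g]])

text \<open>The embeddings of L(beta) are partitioned by their restrictions to L.  Consequently finiteness
  of the embeddings and rationality of norms pass from L to L(beta).\<close>

context fixes L \<beta> \<mu> assumes sf: "subfield_C L" and mp: "min_poly L \<beta> \<mu>" begin

lemma restrict_cemb_emb: "\<rho> \<in> complex_embeddings (adjoin L \<beta>) \<Longrightarrow> restrict_cemb L \<rho> \<in> complex_embeddings L"
  using restriction_is_emb[OF sf L_sub_adjoin[OF sf mp]] unfolding restrict_cemb_def by blast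

lemma extension_of_restriction: "\<rho> \<in> complex_embeddings (adjoin L \<beta>) \<Longrightarrow> \<rho> \<in> extensions (adjoin L \<beta>) L (restrict_cemb L \<rho>)"
  by (simp add: extensions_def restrict_cemb_def)

lemma restriction_of_extension: "\<sigma> \<in> complex_embeddings L \<Longrightarrow> \<rho> \<in> extensions (adjoin L \<beta>) L \<sigma> \<Longrightarrow> restrict_cemb L \<rho> = \<sigma>"
  by (rule ext) (auto simp: restrict_cemb_def extensions_def emb_out[OF sf])

lemma fiber_restrict_cemb: "\<sigma> \<in> complex_embeddings L \<Longrightarrow>
   {\<rho>. \<rho> \<in> complex_embeddings (adjoin L \<beta>) \<and> restrict_cemb L \<rho> = \<sigma>} = extensions (adjoin L \<beta>) L \<sigma>"
  using restriction_of_extension extension_of_restriction by (auto simp: extensions_def)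

lemma embeddings_adjoin_Union: "complex_embeddings (adjoin L \<beta>) = (\<Union>\<sigma>\<in>complex_embeddings L. extensions (adjoin L \<beta>) L \<sigma>)"
  using restrict_cemb_emb extension_of_restriction by (auto simp: extensions_def)

lemma finite_embeddings_adjoin: "finite (complex_embeddings L) \<Longrightarrow> finite (complex_embeddings (adjoin L \<beta>))"
  unfolding embeddings_adjoin_Union using finite_extensions[OF sf mp] by blast

lemma prod_embeddings_adjoin:
  assumes fin: "finite (complex_embeddings L)"
  shows "(\<Prod>\<rho>\<in>complex_embeddings (adjoin L \<beta>). f \<rho>) =
    (\<Prod>\<sigma>\<in>complex_embeddings L. \<Prod>\<rho>\<in>extensions (adjoin L \<beta>) L \<sigma>. f \<rho>)"
proof -
  have "(\<Prod>\<rho>\<in>complex_embeddings (adjoin L \<beta>). f \<rho>) =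
     (\<Prod>\<sigma>\<in>complex_embeddings L. prod f {\<rho>. \<rho> \<in> complex_embeddings (adjoin L \<beta>) \<and> restrict_cemb L \<rho> = \<sigma>})"
    by (rule prod.group[symmetric]) (use finite_embeddings_adjoin[OF fin] fin restrict_cemb_emb in auto)
  also have "\<dots> = (\<Prod>\<sigma>\<in>complex_embeddings L. \<Prod>\<rho>\<in>extensions (adjoin L \<beta>) L \<sigma>. f \<rho>)"
    by (intro prod.cong refl) (simp add: fiber_restrict_cemb)
  finally show ?thesis .
qed

lemma norm_rational_adjoin:
  assumes fin: "finite (complex_embeddings L)"
    and rat: "\<And>x. x \<in> L \<Longrightarrow> (\<Prod>\<sigma>\<in>complex_embeddings L. \<sigma> x) \<in> \<rat>"
    and x: "x \<in> adjoin L \<beta>"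
  shows "(\<Prod>\<rho>\<in>complex_embeddings (adjoin L \<beta>). \<rho> x) \<in> \<rat>"
proof -
  obtain g where g: "polyL L g" "x = poly g \<beta>" using x unfolding adjoin_eq[OF sf mp] poly_vals_def by blast
  have "(\<Prod>\<rho>\<in>complex_embeddings (adjoin L \<beta>). \<rho> x) =
     (\<Prod>\<sigma>\<in>complex_embeddings L. \<Prod>\<rho>\<in>extensions (adjoin L \<beta>) L \<sigma>. \<rho> (poly g \<beta>))"
    using prod_embeddings_adjoin[OF fin] g(2) by simp
  also have "\<dots> = (\<Prod>\<sigma>\<in>complex_embeddings L. \<sigma> (Determinant.det (mult_mat \<mu> g)))"
    by (intro prod.cong refl prod_extensions_det[OF sf mp _ g(1)]) auto
  also have "\<dots> \<in> \<rat>" by (rule rat[OF det_mult_mat_in_L[OF sf mp g(1)]])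
  finally show ?thesis .
qed

end

section \<open>Fields generated by finitely many algebraic numbers\<close>

definition gen :: "complex set \<Rightarrow> complex set" where
  "gen S = \<Inter> {L. subfield_C L \<and> S \<subseteq> L}"

lemma subfield_Inter: "(\<And>L. L \<in> A \<Longrightarrow> subfield_C L) \<Longrightarrow> subfield_C (\<Inter> A)"
  unfolding subfield_C_def by blast

lemma gen_subfield: "subfield_C (gen S)"
  unfolding gen_def by (rule subfield_Inter) auto

lemma gen_sub: "S \<subseteq> gen S"
  unfolding gen_def by auto

lemma gen_least: "subfield_C M \<Longrightarrow> S \<subseteq> M \<Longrightarrow> gen S \<subseteq> M"
  unfolding gen_def by auto

lemma Rats_subfield: "subfield_C (\<rat> :: complex set)"
  unfolding subfield_C_def by auto

lemma gen_empty: "gen {} = \<rat>"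
proof
  show "gen {} \<subseteq> \<rat>" by (rule gen_least[OF Rats_subfield]) auto
  show "\<rat> \<subseteq> gen {}" using sf_Rats[OF gen_subfield] by auto
qed

lemma gen_insert: "gen (insert b S) = adjoin (gen S) b"
proof
  show "gen (insert b S) \<subseteq> adjoin (gen S) b"
    unfolding adjoin_def
  proof (rule Inter_greatest)
    fix M assume "M \<in> {L. subfield_C L \<and> gen S \<subseteq> L \<and> b \<in> L}"
    hence M: "subfield_C M" "gen S \<subseteq> M" "b \<in> M" by auto
    show "gen (insert b S) \<subseteq> M" using gen_sub[of S] M by (intro gen_least) auto
  qed
  show "adjoin (gen S) b \<subseteq> gen (insert b S)"
    unfolding adjoin_def
  proof (rule Inter_lower, safe)
    show "subfield_C (gen (insert b S))" by (rule gen_subfield)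
    show "b \<in> gen (insert b S)" using gen_sub by blast
    fix x assume "x \<in> gen S"
    moreover have "gen S \<subseteq> gen (insert b S)"
      by (intro gen_least[OF gen_subfield]) (use gen_sub[of "insert b S"] in auto)
    ultimately show "x \<in> gen (insert b S)" by blast
  qed
qed

definition id_Rats :: "complex \<Rightarrow> complex" where "id_Rats x = (if x \<in> \<rat> then x else 0)"

lemma emb_Rats_eq: "complex_embeddings \<rat> = {id_Rats}"
proof
  show "{id_Rats} \<subseteq> complex_embeddings \<rat>"
    by (auto simp: complex_embeddings_def id_Rats_def)
  show "complex_embeddings \<rat> \<subseteq> {id_Rats}"
  proof
    fix \<sigma> assume s: "\<sigma> \<in> complex_embeddings \<rat>"
    have "\<sigma> = id_Rats"
      by (rule ext) (auto simp: id_Rats_def emb_Rats[OF Rats_subfield s] emb_out[OF Rats_subfield s])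
    thus "\<sigma> \<in> {id_Rats}" by simp
  qed
qed

theorem finite_embeddings_rational_norm:
  assumes "finite S" "\<forall>b\<in>S. algebraic b"
  shows "finite (complex_embeddings (gen S)) \<and>
    (\<forall>x\<in>gen S. (\<Prod>\<sigma>\<in>complex_embeddings (gen S). \<sigma> x) \<in> \<rat>)"
  using assms
proof (induction S rule: finite_induct)
  case empty
  show ?case unfolding gen_empty emb_Rats_eq by (simp add: id_Rats_def)
next
  case (insert b S)
  have IH: "finite (complex_embeddings (gen S))" "\<And>x. x \<in> gen S \<Longrightarrow> (\<Prod>\<sigma>\<in>complex_embeddings (gen S). \<sigma> x) \<in> \<rat>"
    using insert by auto
  obtain \<mu> where mp: "min_poly (gen S) b \<mu>"
    using min_poly_exists_algebraic[OF gen_subfield] insert.prems by blast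
  show ?case unfolding gen_insert
    using finite_embeddings_adjoin[OF gen_subfield mp IH(1)] norm_rational_adjoin[OF gen_subfield mp IH(1) IH(2)] by blast
qed

definition alg_generated :: "complex set \<Rightarrow> bool" where
  "alg_generated K \<longleftrightarrow> (\<exists>S. finite S \<and> (\<forall>b\<in>S. algebraic b) \<and> K = gen S)"

lemma alg_generated_subfield: "alg_generated K \<Longrightarrow> subfield_C K"
  unfolding alg_generated_def using gen_subfield by blast

lemma alg_generated_adjoin:
  assumes "alg_generated K" "algebraic \<beta>"
  shows "alg_generated (adjoin K \<beta>)"
proof -
  obtain S where S: "finite S" "\<forall>b\<in>S. algebraic b" "K = gen S"
    using assms(1) unfolding alg_generated_def by blast
  have "adjoin K \<beta> = gen (insert \<beta> S)" by (simp add: S(3) gen_insert)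
  thus ?thesis unfolding alg_generated_def using S(1,2) assms(2) by blast
qed

lemma alg_generated_embeddings:
  assumes "alg_generated K"
  shows "finite (complex_embeddings K)" "x \<in> K \<Longrightarrow> (\<Prod>\<sigma>\<in>complex_embeddings K. \<sigma> x) \<in> \<rat>"
  using assms finite_embeddings_rational_norm unfolding alg_generated_def by blast+

text \<open>Every element of a field spanned over Q by finitely many elements is algebraic, since its
  powers are linearly dependent over Q; hence a number field is generated by algebraic numbers.\<close>

lemma algebraic_in_finite_span:
  assumes sf: "subfield_C F" and B: "finite B" "F \<subseteq> {\<Sum>b\<in>B. of_rat (c b) * b | c. True}"
    and x: "x \<in> F"
  shows "algebraic x"
proof -
  define n where "n = card B"
  obtain f where f: "bij_betw f {0..<n} B" using ex_bij_betw_nat_finite[OF B(1)] unfolding n_def by blast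
  have "\<forall>j. \<exists>c. x ^ j = (\<Sum>b\<in>B. of_rat (c b) * b)"
  proof
    fix j have "x ^ j \<in> F" using x by (rule sf_power[OF sf])
    thus "\<exists>c. x ^ j = (\<Sum>b\<in>B. of_rat (c b) * b)" using B(2) by blast
  qed
  then obtain cc where cc: "\<And>j. x ^ j = (\<Sum>b\<in>B. of_rat (cc j b) * b)" by metis
  define a where "a j k = (of_rat (cc j (f k)) :: complex)" for j k
  have span: "x ^ j = (\<Sum>k<n. a j k * f k)" for j
  proof -
    have "x ^ j = (\<Sum>k\<in>{0..<n}. of_rat (cc j (f k)) * f k)"
      using cc[of j] sum.reindex_bij_betw[OF f, of "\<lambda>b. of_rat (cc j b) * b"] by simp
    thus ?thesis by (simp add: a_def atLeast0LessThan)
  qed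
  have "\<exists>h. polyL \<rat> h \<and> h \<noteq> 0 \<and> degree h \<le> n \<and> poly h x = 0"
    by (rule power_dependence[OF Rats_subfield, of n a x f]) (auto simp: a_def span)
  thus ?thesis unfolding algebraic_altdef by (auto simp: polyL_def)
qed

lemma number_field_alg_generated:
  assumes "number_field F"
  shows "alg_generated F"
proof -
  from assms obtain B where sfF: "subfield_C F" and B: "finite B" "B \<subseteq> F"
    "F \<subseteq> {\<Sum>b\<in>B. of_rat (c b) * b | c. True}" unfolding number_field_def by blast
  have FB: "F = gen B"
  proof
    show "gen B \<subseteq> F" by (rule gen_least[OF sfF B(2)])
    show "F \<subseteq> gen B"
    proof
      fix x assume "x \<in> F"
      then obtain c where "x = (\<Sum>b\<in>B. of_rat (c b) * b)" using B(3) by blast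
      moreover have "(\<Sum>b\<in>B. of_rat (c b) * b) \<in> gen B"
      proof (intro sf_sum[OF gen_subfield] sf_mult[OF gen_subfield])
        fix b assume "b \<in> B"
        thus "b \<in> gen B" using gen_sub[of B] by blast
        show "of_rat (c b) \<in> gen B" by (rule sf_Rats[OF gen_subfield]) simp
      qed
      ultimately show "x \<in> gen B" by simp
    qed
  qed
  moreover have "\<forall>b\<in>B. algebraic b" using B(2) by (auto intro: algebraic_in_finite_span[OF sfF B(1,3)])
  ultimately show ?thesis using B(1) unfolding alg_generated_def by blast
qed

section \<open>Real embeddings of totally real fields\<close>

definition cemb :: "(complex \<Rightarrow> real) \<Rightarrow> complex \<Rightarrow> complex" where
  "cemb \<rho> = (\<lambda>x. complex_of_real (\<rho> x))"

lemma cemb_emb: "\<rho> \<in> real_embeddings M \<Longrightarrow> cemb \<rho> \<in> complex_embeddings M"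
  by (auto simp: cemb_def real_embeddings_def complex_embeddings_def)

lemma cemb_inj: "cemb \<rho>1 = cemb \<rho>2 \<Longrightarrow> \<rho>1 = \<rho>2"
  by (rule ext) (metis cemb_def of_real_eq_iff)

lemma Re_emb:
  assumes sf: "subfield_C M" and \<psi>: "\<psi> \<in> complex_embeddings M" and R: "\<forall>x\<in>M. \<psi> x \<in> \<real>"
  shows "(\<lambda>x. Re (\<psi> x)) \<in> real_embeddings M" "cemb (\<lambda>x. Re (\<psi> x)) = \<psi>"
proof -
  have e: "\<And>x. complex_of_real (Re (\<psi> x)) = \<psi> x"
  proof -
    fix x show "complex_of_real (Re (\<psi> x)) = \<psi> x"
    proof (cases "x \<in> M")
      case True hence "\<psi> x \<in> \<real>" using R by blast
      thus ?thesis by (rule of_real_Re)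
    next
      case False thus ?thesis using emb_out[OF sf \<psi>, of x] by simp
    qed
  qed
  show "cemb (\<lambda>x. Re (\<psi> x)) = \<psi>" by (rule ext) (simp add: cemb_def e)
  show "(\<lambda>x. Re (\<psi> x)) \<in> real_embeddings M"
    using \<psi> R unfolding real_embeddings_def complex_embeddings_def by (auto simp: complex_is_Real_iff)
qed

lemma bij_cemb:
  assumes sf: "subfield_C M" and tr: "totally_real M"
  shows "bij_betw cemb (real_embeddings M) (complex_embeddings M)"
  unfolding bij_betw_def
proof
  show "inj_on cemb (real_embeddings M)" using cemb_inj by (auto simp: inj_on_def)
  show "cemb ` real_embeddings M = complex_embeddings M"
  proof
    show "cemb ` real_embeddings M \<subseteq> complex_embeddings M" using cemb_emb by blast
    show "complex_embeddings M \<subseteq> cemb ` real_embeddings M"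
    proof
      fix \<psi> assume \<psi>: "\<psi> \<in> complex_embeddings M"
      have R: "\<forall>x\<in>M. \<psi> x \<in> \<real>" using tr \<psi> by (auto simp: totally_real_def)
      show "\<psi> \<in> cemb ` real_embeddings M" using Re_emb[OF sf \<psi> R] by (metis image_eqI)
    qed
  qed
qed

lemma finite_real_embeddings:
  assumes "finite (complex_embeddings M)"
  shows "finite (real_embeddings M)"
proof (rule finite_imageD)
  show "finite (cemb ` real_embeddings M)" using cemb_emb by (intro finite_subset[OF _ assms]) blast
  show "inj_on cemb (real_embeddings M)" using cemb_inj by (auto simp: inj_on_def)
qed

lemma restrict_real_emb:
  assumes sfF: "subfield_C F" and FM: "F \<subseteq> M" and \<rho>: "\<rho> \<in> real_embeddings M"
  shows "restrict_emb \<rho> F \<in> real_embeddings F"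
  using \<rho> FM sf_add[OF sfF] sf_mult[OF sfF] sf_1[OF sfF]
  unfolding real_embeddings_def restrict_emb_def by (auto simp: subset_iff)

lemma cemb_restrict: "cemb (restrict_emb \<rho> F) = restrict_cemb F (cemb \<rho>)"
  by (rule ext) (simp add: cemb_def restrict_emb_def restrict_cemb_def)

lemma real_emb_0: "subfield_C M \<Longrightarrow> \<rho> \<in> real_embeddings M \<Longrightarrow> \<rho> 0 = 0"
  using emb_0[OF _ cemb_emb] by (metis cemb_def of_real_eq_0_iff)

lemma real_emb_nonzero:
  assumes sf: "subfield_C M" and \<rho>: "\<rho> \<in> real_embeddings M" and x: "x \<in> M" "x \<noteq> 0"
  shows "\<rho> x \<noteq> 0"
  using emb_nz[OF sf cemb_emb[OF \<rho>] x] by (simp add: cemb_def)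

lemma real_emb_poly:
  assumes sf: "subfield_C M" and \<rho>: "\<rho> \<in> real_embeddings M" and FM: "F \<subseteq> M"
    and p: "polyL F p" and x: "x \<in> M"
  shows "\<rho> (poly p x) = poly (map_poly (restrict_emb \<rho> F) p) (\<rho> x)"
  using p
proof (induction p)
  case 0 thus ?case using real_emb_0[OF sf \<rho>] by simp
next
  case (pCons a p)
  hence a: "a \<in> F" and pp: "polyL F p" by (auto simp: polyL_pCons)
  have aM: "a \<in> M" using a FM by auto
  have pM: "poly p x \<in> M" using polyL_poly[OF sf polyL_mono[OF FM pp] x] .
  have r0: "restrict_emb \<rho> F 0 = 0" using real_emb_0[OF sf \<rho>] by (simp add: restrict_emb_def)
  have mp: "map_poly (restrict_emb \<rho> F) (pCons a p) = pCons (restrict_emb \<rho> F a) (map_poly (restrict_emb \<rho> F) p)"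
    by (rule Polynomial.map_poly_pCons) (rule r0)
  have add: "\<rho> (a + x * poly p x) = \<rho> a + \<rho> x * \<rho> (poly p x)"
    using \<rho> aM x pM sf_mult[OF sf x pM] unfolding real_embeddings_def by auto
  show ?case using add pCons.IH[OF pp] mp a by (simp add: restrict_emb_def)
qed

lemma Reals_subfield: "subfield_C (\<real> :: complex set)"
  unfolding subfield_C_def by auto

text \<open>If F is totally real and alpha generates a totally real field over Q, then F(alpha) is
  totally real: every embedding sends alpha and the coefficients of g to real numbers.\<close>

lemma totally_real_adjoin:
  assumes sf: "subfield_C F" and tr: "totally_real F" and mp: "min_poly F \<alpha> \<mu>"
    and trQ: "totally_real (adjoin \<rat> \<alpha>)"
  shows "totally_real (adjoin F \<alpha>)"
  unfolding totally_real_def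
proof (intro ballI)
  fix \<psi> x assume \<psi>: "\<psi> \<in> complex_embeddings (adjoin F \<alpha>)" and x: "x \<in> adjoin F \<alpha>"
  have K_subfield: "subfield_C (adjoin F \<alpha>)" by (rule adjoin_subfield[OF sf mp])
  have FK: "F \<subseteq> adjoin F \<alpha>" by (rule L_sub_adjoin[OF sf mp])
  have aK: "\<alpha> \<in> adjoin F \<alpha>" by (rule beta_adjoin[OF sf mp])
  have aQ: "\<alpha> \<in> adjoin \<rat> \<alpha>" unfolding adjoin_def by auto
  have sfQ: "subfield_C (adjoin \<rat> \<alpha>)" unfolding adjoin_def by (rule subfield_Inter) auto
  have QK: "adjoin \<rat> \<alpha> \<subseteq> adjoin F \<alpha>"
    unfolding adjoin_def by (intro Inter_anti_mono) (auto intro: sf_Rats)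
  have "restrict_cemb (adjoin \<rat> \<alpha>) \<psi> \<in> complex_embeddings (adjoin \<rat> \<alpha>)"
    unfolding restrict_cemb_def by (rule restriction_is_emb[OF sfQ QK \<psi>])
  hence a_real: "\<psi> \<alpha> \<in> \<real>" using trQ aQ unfolding totally_real_def restrict_cemb_def by force
  have resF: "restrict_cemb F \<psi> \<in> complex_embeddings F" unfolding restrict_cemb_def by (rule restriction_is_emb[OF sf FK \<psi>])
  obtain g where g: "polyL F g" "x = poly g \<alpha>" using x unfolding adjoin_eq[OF sf mp] poly_vals_def by blast
  have "\<psi> x = poly (map_poly \<psi> g) (\<psi> \<alpha>)" using emb_poly[OF K_subfield \<psi> FK g(1) aK] g(2) by simp
  moreover have "polyL \<real> (map_poly \<psi> g)"
  proof -
    have "\<And>i. \<psi> (coeff g i) \<in> \<real>"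
    proof -
      fix i have "coeff g i \<in> F" using g(1) by (simp add: polyL_def)
      thus "\<psi> (coeff g i) \<in> \<real>" using tr resF unfolding totally_real_def restrict_cemb_def by force
    qed
    thus ?thesis by (simp add: polyL_def coeff_map_emb[OF K_subfield \<psi>])
  qed
  ultimately show "\<psi> x \<in> \<real>" using polyL_poly[OF Reals_subfield _ a_real] by simp
qed

lemma card_real_extensions:
  assumes sf: "subfield_C F" and mp: "min_poly F \<alpha> \<mu>" and tr: "totally_real (adjoin F \<alpha>)"
    and \<sigma>: "\<sigma> \<in> real_embeddings F"
  shows "card {\<rho>\<in>real_embeddings (adjoin F \<alpha>). restrict_emb \<rho> F = \<sigma>} = degree \<mu>"
proof -
  let ?E = "{\<rho>\<in>real_embeddings (adjoin F \<alpha>). restrict_emb \<rho> F = \<sigma>}"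
  have c\<sigma>: "cemb \<sigma> \<in> complex_embeddings F" using \<sigma> by (rule cemb_emb)
  note fiber = fiber_restrict_cemb[OF sf mp c\<sigma>, symmetric]
  have image: "cemb ` ?E = extensions (adjoin F \<alpha>) F (cemb \<sigma>)"
  proof (intro equalityI subsetI)
    fix \<psi> assume "\<psi> \<in> cemb ` ?E"
    then obtain \<rho> where \<rho>: "\<rho> \<in> real_embeddings (adjoin F \<alpha>)" "restrict_emb \<rho> F = \<sigma>" "\<psi> = cemb \<rho>"
      by blast
    have "\<psi> \<in> complex_embeddings (adjoin F \<alpha>)" using \<rho>(1,3) by (simp add: cemb_emb)
    moreover have "restrict_cemb F \<psi> = cemb \<sigma>" using \<rho>(2,3) cemb_restrict[of \<rho> F] by simp
    ultimately show "\<psi> \<in> extensions (adjoin F \<alpha>) F (cemb \<sigma>)" unfolding fiber by blast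
  next
    fix \<psi> assume "\<psi> \<in> extensions (adjoin F \<alpha>) F (cemb \<sigma>)"
    hence \<psi>: "\<psi> \<in> complex_embeddings (adjoin F \<alpha>)" "restrict_cemb F \<psi> = cemb \<sigma>"
      unfolding fiber by blast+
    then obtain \<rho> where \<rho>: "\<rho> \<in> real_embeddings (adjoin F \<alpha>)" "\<psi> = cemb \<rho>"
      using bij_cemb[OF adjoin_subfield[OF sf mp] tr] unfolding bij_betw_def by blast
    have "cemb (restrict_emb \<rho> F) = cemb \<sigma>" using \<psi>(2) \<rho>(2) by (simp add: cemb_restrict)
    hence "restrict_emb \<rho> F = \<sigma>" by (rule cemb_inj)
    thus "\<psi> \<in> cemb ` ?E" using \<rho> by blast
  qed
  have "inj_on cemb ?E" using cemb_inj by (auto simp: inj_on_def)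
  hence "card ?E = card (extensions (adjoin F \<alpha>) F (cemb \<sigma>))" by (simp flip: image add: card_image)
  also have "\<dots> = degree \<mu>" by (rule card_extensions[OF sf mp c\<sigma>])
  finally show ?thesis .
qed

section \<open>Norms of algebraic integers\<close>

text \<open>Embeddings map algebraic integers to algebraic integers (they fix the integer polynomial).\<close>

lemma emb_algebraic_int:
  assumes sf: "subfield_C M" and \<psi>: "\<psi> \<in> complex_embeddings M" and x: "x \<in> M" and ai: "algebraic_int x"
  shows "algebraic_int (\<psi> x)"
proof -
  obtain p where p: "lead_coeff p = 1" "\<forall>i. coeff p i \<in> \<int>" "poly p x = 0"
    using ai by (auto simp: algebraic_int.simps)
  have pQ: "polyL \<rat> p" using p(2) Ints_subset_Rats by (auto simp: polyL_def)
  have QK: "\<rat> \<subseteq> M" using sf_Rats[OF sf] by auto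
  have mp: "map_poly \<psi> p = p"
    by (rule poly_eqI) (use pQ in \<open>simp add: coeff_map_emb[OF sf \<psi>] polyL_def emb_Rats[OF sf \<psi>]\<close>)
  have "poly p (\<psi> x) = \<psi> (poly p x)" using emb_poly[OF sf \<psi> QK pQ x] mp by simp
  also have "\<dots> = 0" using p(3) emb_0[OF sf \<psi>] by simp
  finally show ?thesis using p(1,2) by (intro algebraic_int.intros) auto
qed

text \<open>The norm of a nonzero algebraic integer of a totally real number field is a nonzero rational
  integer, so the product of its real conjugates has absolute value at least 1.  We apply this to
  gamma = P(alpha).\<close>

lemma real_norm_ge_1:
  assumes K: "alg_generated K" and tr: "totally_real K"
    and \<gamma>: "\<gamma> \<in> K" "\<gamma> \<noteq> 0" "algebraic_int \<gamma>"
  shows "1 \<le> \<bar>\<Prod>\<rho>\<in>real_embeddings K. \<rho> \<gamma>\<bar>"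
proof -
  let ?N = "\<Prod>\<psi>\<in>complex_embeddings K. \<psi> \<gamma>"
  have sf: "subfield_C K" using K by (rule alg_generated_subfield)
  have fin: "finite (complex_embeddings K)" and rat: "?N \<in> \<rat>"
    using alg_generated_embeddings[OF K] \<gamma>(1) by auto
  have "algebraic_int ?N"
    using fin by (intro algebraic_int_prod emb_algebraic_int[OF sf _ \<gamma>(1,3)])
  hence "?N \<in> \<int>" using rat by (rule rational_algebraic_int_is_int)
  moreover have "?N \<noteq> 0" using fin emb_nz[OF sf _ \<gamma>(1,2)] by simp
  ultimately have "1 \<le> norm ?N" by (auto elim!: Ints_cases)
  also have "?N = of_real (\<Prod>\<rho>\<in>real_embeddings K. \<rho> \<gamma>)"
    using prod.reindex_bij_betw[OF bij_cemb[OF sf tr], of "\<lambda>\<psi>. \<psi> \<gamma>"] by (simp add: cemb_def)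
  finally show ?thesis by (simp only: norm_of_real)
qed

lemma real_norm_poly_value_ge_1:
  assumes K: "alg_generated K" "totally_real K" and F: "F \<subseteq> K"
    and P: "\<And>i. coeff P i \<in> ring_of_integers F" and \<alpha>: "\<alpha> \<in> K" "algebraic_int \<alpha>"
    and P\<alpha>: "poly P \<alpha> \<noteq> 0"
  shows "1 \<le> (\<Prod>\<rho>\<in>real_embeddings K. \<bar>\<rho> (poly P \<alpha>)\<bar>)"
proof -
  have "polyL K P" using P F by (auto simp: polyL_def ring_of_integers_def)
  hence "poly P \<alpha> \<in> K" using polyL_poly[OF alg_generated_subfield[OF K(1)]] \<alpha>(1) by blast
  moreover have "algebraic_int (poly P \<alpha>)"
    using P \<alpha>(2) by (intro algebraic_int_poly) (auto simp: ring_of_integers_def)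
  ultimately have "1 \<le> \<bar>\<Prod>\<rho>\<in>real_embeddings K. \<rho> (poly P \<alpha>)\<bar>"
    using real_norm_ge_1[OF K] P\<alpha> by blast
  thus ?thesis by (simp add: abs_prod)
qed

text \<open>The values of a polynomial on a compact interval are bounded, so the supremum defining
  max_abs_on bounds each of them; it is positive for a nonzero polynomial on a nondegenerate
  interval, which has infinitely many points and hence a non-root.\<close>

lemma max_abs_on_upper:
  assumes "u \<le> x" "x \<le> v"
  shows "\<bar>poly (map_poly \<sigma> P) x\<bar> \<le> max_abs_on \<sigma> P u v"
proof -
  have "compact ((\<lambda>x. \<bar>poly (map_poly \<sigma> P) x\<bar>) ` {u..v})"
    by (intro compact_continuous_image continuous_intros) auto
  hence "bdd_above ((\<lambda>x. \<bar>poly (map_poly \<sigma> P) x\<bar>) ` {u..v})"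
    by (intro bounded_imp_bdd_above compact_imp_bounded)
  thus ?thesis unfolding max_abs_on_def using assms by (intro cSUP_upper) auto
qed

lemma max_abs_on_pos:
  assumes "u < v" "map_poly \<sigma> P \<noteq> 0"
  shows "max_abs_on \<sigma> P u v > 0"
proof -
  have "\<not> {u..v} \<subseteq> {x. poly (map_poly \<sigma> P) x = 0}"
    using poly_roots_finite[OF assms(2)] infinite_Icc[OF assms(1)] finite_subset by blast
  then obtain x where x0: "x \<in> {u..v}" "poly (map_poly \<sigma> P) x \<noteq> 0" by blast
  hence x: "u \<le> x" "x \<le> v" "poly (map_poly \<sigma> P) x \<noteq> 0" by auto
  have "0 < \<bar>poly (map_poly \<sigma> P) x\<bar>" using x by simp
  also have "\<dots> \<le> max_abs_on \<sigma> P u v" by (rule max_abs_on_upper[OF x(1,2)])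
  finally show ?thesis .
qed

text \<open>Consequently a real embedding rho maps P(alpha) into the range bounded by max_abs_on for the
  restricted embedding on any interval containing rho(alpha); and for P nonzero over F the bound
  is positive, since embeddings preserve the leading coefficient.\<close>

lemma value_bound_at_embedding:
  assumes sfK: "subfield_C K" and \<rho>: "\<rho> \<in> real_embeddings K" and FK: "F \<subseteq> K"
    and P: "polyL F P" and \<alpha>: "\<alpha> \<in> K" and uv: "u \<le> \<rho> \<alpha>" "\<rho> \<alpha> \<le> v"
  shows "\<bar>\<rho> (poly P \<alpha>)\<bar> \<le> max_abs_on (restrict_emb \<rho> F) P u v"
  unfolding real_emb_poly[OF sfK \<rho> FK P \<alpha>] using uv by (rule max_abs_on_upper)

lemma max_abs_on_emb_pos:
  assumes sf: "subfield_C F" and \<sigma>: "\<sigma> \<in> real_embeddings F" and P: "polyL F P" "P \<noteq> 0"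
    and uv: "u < v"
  shows "0 < max_abs_on \<sigma> P u v"
proof (rule max_abs_on_pos[OF uv])
  have "lead_coeff P \<in> F" "lead_coeff P \<noteq> 0" using P by (auto simp: polyL_def)
  hence "\<sigma> (lead_coeff P) \<noteq> 0" using real_emb_nonzero[OF sf \<sigma>] by simp
  hence "coeff (map_poly \<sigma> P) (degree P) \<noteq> 0" using real_emb_0[OF sf \<sigma>] by (simp add: coeff_map_poly)
  thus "map_poly \<sigma> P \<noteq> 0" by auto
qed

section \<open>The counting inequality\<close>

lemma prod_over_fibers:
  fixes f :: "'b \<Rightarrow> 'c::comm_semiring_1"
  assumes fin: "finite E" "finite B" and r: "\<And>x. x \<in> E \<Longrightarrow> r x \<in> B"
    and fiber: "\<And>y. y \<in> B \<Longrightarrow> card {x\<in>E. r x = y} = e"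
  shows "(\<Prod>x\<in>E. f (r x)) = (\<Prod>y\<in>B. f y) ^ e"
proof -
  have "r ` E \<subseteq> B" using r by blast
  hence "(\<Prod>x\<in>E. f (r x)) = (\<Prod>y\<in>B. \<Prod>x\<in>{x\<in>E. r x = y}. f (r x))"
    by (rule prod.group[OF fin, symmetric])
  also have "\<dots> = (\<Prod>y\<in>B. f y ^ e)"
  proof (rule prod.cong[OF refl])
    fix y assume y: "y \<in> B"
    have "(\<Prod>x\<in>{x\<in>E. r x = y}. f (r x)) = (\<Prod>x\<in>{x\<in>E. r x = y}. f y)"
      by (rule prod.cong) simp_all
    also have "\<dots> = f y ^ e" using fiber[OF y] by simp
    finally show "(\<Prod>x\<in>{x\<in>E. r x = y}. f (r x)) = f y ^ e" .
  qed
  also have "\<dots> = (\<Prod>y\<in>B. f y) ^ e" by (rule prod_power_distrib[symmetric])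
  finally show ?thesis .
qed

lemma product_bound:
  fixes g :: "'a \<Rightarrow> real" and \<delta> :: "'b \<Rightarrow> real" and A :: "'i \<Rightarrow> real"
  assumes fin: "finite E" "finite B" and r: "\<And>x. x \<in> E \<Longrightarrow> r x \<in> B"
    and fiber: "\<And>y. y \<in> B \<Longrightarrow> card {x\<in>E. r x = y} = e"
    and \<tau>: "\<tau> ` I \<subseteq> E" "inj_on \<tau> I"
    and norm: "1 \<le> (\<Prod>x\<in>E. \<bar>g x\<bar>)"
    and bound_\<tau>: "\<And>i. i \<in> I \<Longrightarrow> \<bar>g (\<tau> i)\<bar> \<le> A i"
    and bound_rest: "\<And>x. x \<in> E - \<tau> ` I \<Longrightarrow> \<bar>g x\<bar> \<le> \<delta> (r x)"
    and \<delta>_pos: "\<And>y. y \<in> B \<Longrightarrow> 0 < \<delta> y"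
  shows "1 \<le> (\<Prod>i\<in>I. A i) * (\<Prod>y\<in>B. \<delta> y) ^ e / (\<Prod>i\<in>I. \<delta> (r (\<tau> i)))"
proof -
  have split: "(\<Prod>x\<in>E. h x) = (\<Prod>i\<in>I. h (\<tau> i)) * (\<Prod>x\<in>E - \<tau> ` I. h x)" for h :: "'a \<Rightarrow> real"
  proof -
    have "(\<Prod>x\<in>E. h x) = (\<Prod>x\<in>E - \<tau> ` I. h x) * (\<Prod>x\<in>\<tau> ` I. h x)"
      by (rule prod.subset_diff[OF \<tau>(1) fin(1)])
    also have "(\<Prod>x\<in>\<tau> ` I. h x) = (\<Prod>i\<in>I. h (\<tau> i))" using prod.reindex[OF \<tau>(2), of h] by simp
    finally show ?thesis by (simp only: mult.commute)
  qed
  have \<delta>_nonneg: "0 \<le> \<delta> (r x)" if "x \<in> E" for x using \<delta>_pos[OF r[OF that]] by simp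
  have D_pos: "0 < (\<Prod>i\<in>I. \<delta> (r (\<tau> i)))" using \<tau>(1) r \<delta>_pos by (intro prod_pos) blast
  have "1 \<le> (\<Prod>i\<in>I. \<bar>g (\<tau> i)\<bar>) * (\<Prod>x\<in>E - \<tau> ` I. \<bar>g x\<bar>)" using norm split[of "\<lambda>x. \<bar>g x\<bar>"] by simp
  also have "\<dots> \<le> (\<Prod>i\<in>I. A i) * (\<Prod>x\<in>E - \<tau> ` I. \<delta> (r x))"
  proof (rule mult_mono)
    show "(\<Prod>i\<in>I. \<bar>g (\<tau> i)\<bar>) \<le> (\<Prod>i\<in>I. A i)" using bound_\<tau> by (intro prod_mono) simp
    show "(\<Prod>x\<in>E - \<tau> ` I. \<bar>g x\<bar>) \<le> (\<Prod>x\<in>E - \<tau> ` I. \<delta> (r x))"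
      using bound_rest by (intro prod_mono) simp
    show "0 \<le> (\<Prod>i\<in>I. A i)" using bound_\<tau> by (intro prod_nonneg) (meson abs_ge_zero order_trans)
    show "0 \<le> (\<Prod>x\<in>E - \<tau> ` I. \<bar>g x\<bar>)" by (intro prod_nonneg) simp
  qed
  also have "(\<Prod>x\<in>E - \<tau> ` I. \<delta> (r x)) = (\<Prod>y\<in>B. \<delta> y) ^ e / (\<Prod>i\<in>I. \<delta> (r (\<tau> i)))"
  proof -
    have "(\<Prod>i\<in>I. \<delta> (r (\<tau> i))) * (\<Prod>x\<in>E - \<tau> ` I. \<delta> (r x)) = (\<Prod>y\<in>B. \<delta> y) ^ e"
      using split[of "\<lambda>x. \<delta> (r x)"] prod_over_fibers[OF fin r fiber, of \<delta>] by simp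
    thus ?thesis using D_pos by (simp add: eq_divide_eq mult.commute)
  qed
  finally show ?thesis by (simp only: times_divide_eq_right)
qed

lemma log_degree_bound:
  fixes g :: "'a \<Rightarrow> real" and \<delta> :: "'b \<Rightarrow> real" and A :: "'i \<Rightarrow> real"
  assumes fin: "finite E" "finite B" "finite I" and r: "\<And>x. x \<in> E \<Longrightarrow> r x \<in> B"
    and fiber: "\<And>y. y \<in> B \<Longrightarrow> card {x\<in>E. r x = y} = e"
    and \<tau>: "\<tau> ` I \<subseteq> E" "inj_on \<tau> I"
    and norm: "1 \<le> (\<Prod>x\<in>E. \<bar>g x\<bar>)"
    and bound_\<tau>: "\<And>i. i \<in> I \<Longrightarrow> \<bar>g (\<tau> i)\<bar> \<le> A i"
    and bound_rest: "\<And>x. x \<in> E - \<tau> ` I \<Longrightarrow> \<bar>g x\<bar> \<le> \<delta> (r x)"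
    and \<delta>_pos: "\<And>y. y \<in> B \<Longrightarrow> 0 < \<delta> y" and \<delta>_lt_1: "(\<Prod>y\<in>B. \<delta> y) < 1"
  shows "real e \<le> (ln (\<Prod>i\<in>I. A i) - ln (\<Prod>i\<in>I. \<delta> (r (\<tau> i)))) / - ln (\<Prod>y\<in>B. \<delta> y)"
proof -
  define \<Delta> where "\<Delta> = (\<Prod>y\<in>B. \<delta> y)"
  have g_pos: "0 < \<bar>g x\<bar>" if x: "x \<in> E" for x
  proof (rule ccontr)
    assume "\<not> 0 < \<bar>g x\<bar>"
    hence "(\<Prod>x\<in>E. \<bar>g x\<bar>) = 0" using fin(1) x by (intro prod_zero) auto
    thus False using norm by simp
  qed
  have A_pos: "0 < (\<Prod>i\<in>I. A i)"
  proof (rule prod_pos)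
    fix i assume i: "i \<in> I"
    hence "0 < \<bar>g (\<tau> i)\<bar>" using g_pos \<tau>(1) by blast
    thus "0 < A i" using bound_\<tau>[OF i] by linarith
  qed
  have D_pos: "0 < (\<Prod>i\<in>I. \<delta> (r (\<tau> i)))" using \<tau>(1) r \<delta>_pos by (intro prod_pos) blast
  have \<Delta>_pos: "0 < \<Delta>" unfolding \<Delta>_def using \<delta>_pos by (intro prod_pos) blast
  have "0 \<le> ln ((\<Prod>i\<in>I. A i) * \<Delta> ^ e / (\<Prod>i\<in>I. \<delta> (r (\<tau> i))))"
    using product_bound[OF fin(1,2) r fiber \<tau> norm bound_\<tau> bound_rest \<delta>_pos] by (simp add: \<Delta>_def)
  also have "\<dots> = ln (\<Prod>i\<in>I. A i) + real e * ln \<Delta> - ln (\<Prod>i\<in>I. \<delta> (r (\<tau> i)))"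
    using A_pos D_pos \<Delta>_pos by (simp add: ln_mult ln_div ln_realpow)
  finally have key: "real e * - ln \<Delta> \<le> ln (\<Prod>i\<in>I. A i) - ln (\<Prod>i\<in>I. \<delta> (r (\<tau> i)))"
    by simp
  have "0 < - ln \<Delta>" using \<Delta>_pos \<delta>_lt_1 by (simp add: \<Delta>_def)
  thus ?thesis unfolding \<Delta>_def[symmetric] using key by (simp only: pos_le_divide_eq)
qed

theorem lemma4p3:
  fixes F :: "complex set" and P :: "complex poly" and \<alpha> :: complex
    and a b :: "(complex \<Rightarrow> real) \<Rightarrow> real"
    and m :: nat and s t :: "nat \<Rightarrow> real" and \<tau> :: "nat \<Rightarrow> complex \<Rightarrow> real"
  assumes F: "number_field F" "totally_real F"
    and ab: "\<And>\<sigma>. \<sigma> \<in> real_embeddings F \<Longrightarrow> a \<sigma> < b \<sigma>"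
    and m: "m \<ge> 1"
    and st: "\<And>i. i \<in> {1..m} \<Longrightarrow> s i \<le> t i"
    and P: "P \<noteq> 0" "\<And>i. coeff P i \<in> ring_of_integers F"
    and \<delta>: "(\<Prod>\<sigma>\<in>real_embeddings F. max_abs_on \<sigma> P (a \<sigma>) (b \<sigma>)) < 1"
    and \<alpha>: "totally_real_alg_int \<alpha>"
    and \<tau>: "\<And>i. i \<in> {1..m} \<Longrightarrow> \<tau> i \<in> real_embeddings (adjoin F \<alpha>)"
    and \<tau>_inj: "inj_on \<tau> {1..m}"
    and \<tau>_st: "\<And>i. i \<in> {1..m} \<Longrightarrow> s i \<le> \<tau> i \<alpha> \<and> \<tau> i \<alpha> \<le> t i"
    and \<tau>_ab: "\<And>\<rho>. \<rho> \<in> real_embeddings (adjoin F \<alpha>) - \<tau> ` {1..m} \<Longrightarrow>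
        a (restrict_emb \<rho> F) \<le> \<rho> \<alpha> \<and> \<rho> \<alpha> \<le> b (restrict_emb \<rho> F)"
    and P\<alpha>: "poly P \<alpha> \<noteq> 0"
  shows "1 \<le> ext_degree (adjoin F \<alpha>) F \<and>
    real (ext_degree (adjoin F \<alpha>) F) \<le>
      (ln (\<Prod>i=1..m. max_abs_on (restrict_emb (\<tau> i) F) P (s i) (t i))
       - ln (\<Prod>i=1..m. max_abs_on (restrict_emb (\<tau> i) F) P
                (a (restrict_emb (\<tau> i) F)) (b (restrict_emb (\<tau> i) F))))
      / (- ln (\<Prod>\<sigma>\<in>real_embeddings F. max_abs_on \<sigma> P (a \<sigma>) (b \<sigma>)))"
proof -
  have genF: "alg_generated F" by (rule number_field_alg_generated[OF F(1)])
  have sfF: "subfield_C F" by (rule alg_generated_subfield[OF genF])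
  have \<alpha>_int: "algebraic_int \<alpha>" and trQ: "totally_real (adjoin \<rat> \<alpha>)"
    using \<alpha> by (auto simp: totally_real_alg_int_def)
  obtain \<mu> where mp: "min_poly F \<alpha> \<mu>" using min_poly_exists_algebraic[OF sfF] \<alpha>_int by blast
  have genK: "alg_generated (adjoin F \<alpha>)" using genF \<alpha>_int by (intro alg_generated_adjoin) auto
  have trK: "totally_real (adjoin F \<alpha>)" by (rule totally_real_adjoin[OF sfF F(2) mp trQ])
  have sfK: "subfield_C (adjoin F \<alpha>)" and FK: "F \<subseteq> adjoin F \<alpha>" and \<alpha>K: "\<alpha> \<in> adjoin F \<alpha>"
    using adjoin_subfield L_sub_adjoin beta_adjoin sfF mp by blast+
  have PF: "polyL F P" using P(2) by (auto simp: polyL_def ring_of_integers_def)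
  have norm: "1 \<le> (\<Prod>\<rho>\<in>real_embeddings (adjoin F \<alpha>). \<bar>\<rho> (poly P \<alpha>)\<bar>)"
    by (rule real_norm_poly_value_ge_1[OF genK trK FK P(2) \<alpha>K \<alpha>_int P\<alpha>])
  have fin: "finite (real_embeddings (adjoin F \<alpha>))" "finite (real_embeddings F)"
    using genK genF by (auto intro: finite_real_embeddings alg_generated_embeddings)
  have "real (degree \<mu>) \<le> (ln (\<Prod>i\<in>{1..m}. max_abs_on (restrict_emb (\<tau> i) F) P (s i) (t i))
       - ln (\<Prod>i\<in>{1..m}. max_abs_on (restrict_emb (\<tau> i) F) P
                (a (restrict_emb (\<tau> i) F)) (b (restrict_emb (\<tau> i) F))))
      / - ln (\<Prod>\<sigma>\<in>real_embeddings F. max_abs_on \<sigma> P (a \<sigma>) (b \<sigma>))"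
  proof (rule log_degree_bound[OF fin finite_atLeastAtMost _ _ _ \<tau>_inj norm _ _ _ \<delta>])
    show "restrict_emb \<rho> F \<in> real_embeddings F" if "\<rho> \<in> real_embeddings (adjoin F \<alpha>)" for \<rho>
      by (rule restrict_real_emb[OF sfF FK that])
    show "card {\<rho>\<in>real_embeddings (adjoin F \<alpha>). restrict_emb \<rho> F = \<sigma>} = degree \<mu>"
      if "\<sigma> \<in> real_embeddings F" for \<sigma>
      by (rule card_real_extensions[OF sfF mp trK that])
    show "\<tau> ` {1..m} \<subseteq> real_embeddings (adjoin F \<alpha>)" using \<tau> by blast
    show "\<bar>\<tau> i (poly P \<alpha>)\<bar> \<le> max_abs_on (restrict_emb (\<tau> i) F) P (s i) (t i)" if "i \<in> {1..m}" for i
      using \<tau>_st[OF that] by (intro value_bound_at_embedding[OF sfK \<tau>[OF that] FK PF \<alpha>K]) auto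
    show "\<bar>\<rho> (poly P \<alpha>)\<bar> \<le> max_abs_on (restrict_emb \<rho> F) P (a (restrict_emb \<rho> F)) (b (restrict_emb \<rho> F))"
      if "\<rho> \<in> real_embeddings (adjoin F \<alpha>) - \<tau> ` {1..m}" for \<rho>
      using \<tau>_ab[OF that] that by (intro value_bound_at_embedding[OF sfK _ FK PF \<alpha>K]) auto
    show "0 < max_abs_on \<sigma> P (a \<sigma>) (b \<sigma>)" if "\<sigma> \<in> real_embeddings F" for \<sigma>
      by (rule max_abs_on_emb_pos[OF sfF that PF P(1) ab[OF that]])
  qed
  thus ?thesis using ext_degree_adjoin[OF sfF mp] min_poly_degree_pos[OF sfF mp] by simp
qed

end
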